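(* Let $\Psi=\{\psi_i\}_{i\in I}$ be a lower frame sequence in a separable Hilbert space $\mathcal{H}$ with canonical dual $\widetilde\Psi=\{\widetilde\psi_i\}$. Then the pseudo-inverse of the closed operator $\overline{D^r_\Psi}$ is given by $$\overline{D^r_\Psi}^{\dagger}f=\{\langle f,\widetilde\psi_i\rangle\}_{i\in I}\qquad(f\in\mathcal{H}_\Psi).$$ In particular, if $D_\Psi$ is closable, then $\overline{D_\Psi}^{\dagger}f=\{\langle f,\widetilde\psi_i\rangle\}_{i\in I}$.
   Context: $I$ is countable. $D_\Psi c=\sum_ic_i\psi_i$ on $\{c\in\ell^2:\sum_ic_i\psi_i\text{ converges in }\mathcal{H}\}$. $\mathcal{D}(C_\Psi)=\{f\in\mathcal{H}:\{\langle f,\psi_i\rangle\}_i\in\ell^2\}$, $\mathcal{H}_\Psi:=\overline{\mathcal{D}(C_\Psi)}$, $\pi_{\mathcal{H}_\Psi}$ the orthogonal projection onto $\mathcal{H}_\Psi$. $\Psi$ is a lower frame sequence if there is $A>0$ with $A\|f\|^2\le\sum_i|\langle f,\psi_i\rangle|^2$ for all $f\in\mathcal{D}(C_\Psi)$. $D^r_\Psi:\ell^2\supseteq\mathcal{D}(D^r_\Psi)\to\mathcal{H}_\Psi$, $D^r_\Psi c=\sum_ic_i\pi_{\mathcal{H}_\Psi}\psi_i$ on the set of $c\in\ell^2$ for which this converges; it is densely defined and closable with closure $\overline{D^r_\Psi}$. With $C^r_\Psi:\mathcal{D}(C_\Psi)\subseteq\mathcal{H}_\Psi\to\ell^2$,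 $C^r_\Psi f=\{\langle f,\psi_i\rangle\}$, the generalized frame operator is $\Gamma_\Psi=(C^r_\Psi)^*C^r_\Psi$ (bijective onto $\mathcal{H}_\Psi$ with bounded inverse when $\Psi$ is a lower frame sequence), and $\widetilde\psi_i:=\Gamma_\Psi^{-1}\pi_{\mathcal{H}_\Psi}\psi_i$. For a closed densely defined operator $T:\mathcal{D}(T)\subseteq\mathcal{K}_1\to\mathcal{K}_2$ the pseudo-inverse $T^\dagger$ is the unique operator from $\mathcal{K}_2$ to $\mathcal{K}_1$ with $\overline{\mathcal{R}(T^\dagger)}=\ker(T)^\perp$, $\ker(T^\dagger)=\mathcal{R}(T)^\perp$ and $TT^\dagger T=T$. *)

theory Defs
  imports "HOL-Analysis.Analysis"
begin

class complex_vector = real_vector +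
  fixes scaleC :: "complex \<Rightarrow> 'a \<Rightarrow> 'a"
  assumes scaleC_add_right: "scaleC a (x + y) = scaleC a x + scaleC a y"
    and scaleC_add_left: "scaleC (a + b) x = scaleC a x + scaleC b x"
    and scaleC_scaleC: "scaleC a (scaleC b x) = scaleC (a * b) x"
    and scaleC_one: "scaleC 1 x = x"
    and scaleR_scaleC: "scaleR r x = scaleC (complex_of_real r) x"

class complex_inner = complex_vector + real_normed_vector +
  fixes cinner :: "'a \<Rightarrow> 'a \<Rightarrow> complex"
  assumes cinner_commute: "cinner x y = cnj (cinner y x)"
    and cinner_add_left: "cinner (x + y) z = cinner x z + cinner y z"
    and cinner_scaleC_left: "cinner (scaleC r x) y = r * cinner x y"
    and cinner_self_real: "Im (cinner x x) = 0"
    and cinner_self_nonneg: "0 \<le> Re (cinner x x)"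
    and cinner_eq_zero_iff: "cinner x x = 0 \<longleftrightarrow> x = 0"
    and norm_eq_sqrt_cinner: "norm x = sqrt (Re (cinner x x))"

class chilbert = complex_inner + complete_space

definition ell2 :: "('i \<Rightarrow> complex) set" where
  "ell2 = {c. (\<lambda>i. (cmod (c i))\<^sup>2) summable_on UNIV}"

definition l2norm :: "('i \<Rightarrow> complex) \<Rightarrow> real" where
  "l2norm c = sqrt (\<Sum>\<^sub>\<infinity>i. (cmod (c i))\<^sup>2)"

definition l2inner :: "('i \<Rightarrow> complex) \<Rightarrow> ('i \<Rightarrow> complex) \<Rightarrow> complex" where
  "l2inner c d = (\<Sum>\<^sub>\<infinity>i. c i * cnj (d i))"

definition l2_lim :: "(nat \<Rightarrow> 'i \<Rightarrow> complex) \<Rightarrow> ('i \<Rightarrow> complex) \<Rightarrow> bool" where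
  "l2_lim x c \<longleftrightarrow> c \<in> ell2 \<and> (\<forall>n. x n \<in> ell2) \<and> (\<lambda>n. l2norm (\<lambda>i. x n i - c i)) \<longlonglongrightarrow> 0"

definition l2closure :: "('i \<Rightarrow> complex) set \<Rightarrow> ('i \<Rightarrow> complex) set" where
  "l2closure A = {c. \<exists>x. (\<forall>n. x n \<in> A) \<and> l2_lim x c}"

section \<open>Operators ell^2 \<supseteq> D \<rightarrow> H, given by a domain D and a map T\<close>

definition graph_closure ::
  "('i \<Rightarrow> complex) set \<Rightarrow> (('i \<Rightarrow> complex) \<Rightarrow> 'h::chilbert) \<Rightarrow> (('i \<Rightarrow> complex) \<times> 'h) set" where
  "graph_closure D T = {(c, f). \<exists>x. (\<forall>n. x n \<in> D) \<and> l2_lim x c \<and> (\<lambda>n. T (x n)) \<longlonglongrightarrow> f}"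

definition closable :: "('i \<Rightarrow> complex) set \<Rightarrow> (('i \<Rightarrow> complex) \<Rightarrow> 'h::chilbert) \<Rightarrow> bool" where
  "closable D T \<longleftrightarrow> (\<forall>c f g. (c, f) \<in> graph_closure D T \<and> (c, g) \<in> graph_closure D T \<longrightarrow> f = g)"

definition op_closure_dom :: "('i \<Rightarrow> complex) set \<Rightarrow> (('i \<Rightarrow> complex) \<Rightarrow> 'h::chilbert) \<Rightarrow> ('i \<Rightarrow> complex) set" where
  "op_closure_dom D T = fst ` graph_closure D T"

definition op_closure_fun :: "('i \<Rightarrow> complex) set \<Rightarrow> (('i \<Rightarrow> complex) \<Rightarrow> 'h::chilbert) \<Rightarrow> ('i \<Rightarrow> complex) \<Rightarrow> 'h" where
  "op_closure_fun D T c = (THE f. (c, f) \<in> graph_closure D T)"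

text \<open>For an operator T with domain D \<subseteq> ell^2 and values in the Hilbert space K (a closed
  subspace of H), the operator S with domain E \<subseteq> K and values in ell^2 is a pseudo-inverse
  of T iff closure(R(S)) = ker(T)^\<bottom>, ker(S) = R(T)^\<bottom> (in K) and T S T = T.\<close>
definition is_pseudo_inverse ::
  "'h::chilbert set \<Rightarrow> ('i \<Rightarrow> complex) set \<Rightarrow> (('i \<Rightarrow> complex) \<Rightarrow> 'h) \<Rightarrow> 'h set \<Rightarrow> ('h \<Rightarrow> 'i \<Rightarrow> complex) \<Rightarrow> bool" where
  "is_pseudo_inverse K D T E S \<longleftrightarrow>
     E \<subseteq> K \<and> (\<forall>f\<in>E. S f \<in> ell2) \<and>
     l2closure (S ` E) = {c \<in> ell2. \<forall>d\<in>D. T d = 0 \<longrightarrow> l2inner c d = 0} \<and>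
     {f \<in> E. S f = (\<lambda>i. 0)} = {f \<in> K. \<forall>d\<in>D. cinner f (T d) = 0} \<and>
     (\<forall>d\<in>D. T d \<in> E \<and> S (T d) \<in> D \<and> T (S (T d)) = T d)"

definition analysis_dom :: "('i \<Rightarrow> 'h::chilbert) \<Rightarrow> 'h set" where
  "analysis_dom \<psi> = {f. (\<lambda>i. cinner f (\<psi> i)) \<in> ell2}"

definition H_Psi :: "('i \<Rightarrow> 'h::chilbert) \<Rightarrow> 'h set" where
  "H_Psi \<psi> = closure (analysis_dom \<psi>)"

definition lower_frame_sequence :: "('i \<Rightarrow> 'h::chilbert) \<Rightarrow> bool" where
  "lower_frame_sequence \<psi> \<longleftrightarrow>
     (\<exists>A>0. \<forall>f\<in>analysis_dom \<psi>. A * (norm f)\<^sup>2 \<le> (\<Sum>\<^sub>\<infinity>i. (cmod (cinner f (\<psi> i)))\<^sup>2))"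

definition orth_proj :: "'h::chilbert set \<Rightarrow> 'h \<Rightarrow> 'h" where
  "orth_proj M f = (THE g. g \<in> M \<and> (\<forall>m\<in>M. cinner (f - g) m = 0))"

definition synthesis_dom :: "('i \<Rightarrow> 'h::chilbert) \<Rightarrow> ('i \<Rightarrow> complex) set" where
  "synthesis_dom \<psi> = {c \<in> ell2. \<exists>s. ((\<lambda>i. scaleC (c i) (\<psi> i)) has_sum s) UNIV}"

definition synthesis :: "('i \<Rightarrow> 'h::chilbert) \<Rightarrow> ('i \<Rightarrow> complex) \<Rightarrow> 'h" where
  "synthesis \<psi> c = (\<Sum>\<^sub>\<infinity>i. scaleC (c i) (\<psi> i))"

definition red_synthesis_dom :: "('i \<Rightarrow> 'h::chilbert) \<Rightarrow> ('i \<Rightarrow> complex) set" where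
  "red_synthesis_dom \<psi> = synthesis_dom (\<lambda>i. orth_proj (H_Psi \<psi>) (\<psi> i))"

definition red_synthesis :: "('i \<Rightarrow> 'h::chilbert) \<Rightarrow> ('i \<Rightarrow> complex) \<Rightarrow> 'h" where
  "red_synthesis \<psi> = synthesis (\<lambda>i. orth_proj (H_Psi \<psi>) (\<psi> i))"

text \<open>Adjoint (C^r_\<Psi>)^* : ell^2 \<supseteq> dom \<rightarrow> H_\<Psi> of C^r_\<Psi> : D(C_\<Psi>) \<subseteq> H_\<Psi> \<rightarrow> ell^2.\<close>
definition analysis_adj_dom :: "('i \<Rightarrow> 'h::chilbert) \<Rightarrow> ('i \<Rightarrow> complex) set" where
  "analysis_adj_dom \<psi> = {c \<in> ell2. \<exists>g\<in>H_Psi \<psi>.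
      \<forall>f\<in>analysis_dom \<psi>. l2inner (\<lambda>i. cinner f (\<psi> i)) c = cinner f g}"

definition analysis_adj :: "('i \<Rightarrow> 'h::chilbert) \<Rightarrow> ('i \<Rightarrow> complex) \<Rightarrow> 'h" where
  "analysis_adj \<psi> c = (THE g. g \<in> H_Psi \<psi> \<and>
      (\<forall>f\<in>analysis_dom \<psi>. l2inner (\<lambda>i. cinner f (\<psi> i)) c = cinner f g))"

definition frame_op_dom :: "('i \<Rightarrow> 'h::chilbert) \<Rightarrow> 'h set" where
  "frame_op_dom \<psi> = {f \<in> analysis_dom \<psi>. (\<lambda>i. cinner f (\<psi> i)) \<in> analysis_adj_dom \<psi>}"

definition frame_op :: "('i \<Rightarrow> 'h::chilbert) \<Rightarrow> 'h \<Rightarrow> 'h" where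
  "frame_op \<psi> f = analysis_adj \<psi> (\<lambda>i. cinner f (\<psi> i))"

definition canonical_dual :: "('i \<Rightarrow> 'h::chilbert) \<Rightarrow> 'i \<Rightarrow> 'h" where
  "canonical_dual \<psi> i = (THE g. g \<in> frame_op_dom \<psi> \<and> frame_op \<psi> g = orth_proj (H_Psi \<psi>) (\<psi> i))"

end

(* The closure of the reduced synthesis operator D^r is the adjoint of the analysis operator
   C^r : H_Psi -> l2: a vector orthogonal to the graph of a synthesis operator has the form
   (- C x, x). For a lower frame sequence C^r is bounded below, so its range is closed, and the
   Riesz representation of C x |-> <x, h> on that range shows that the frame operator
   Gamma = (C^r)^* C^r maps its domain bijectively onto H_Psi. The coefficient map
   f |-> (<f, dual_i>)_i is C Gamma^-1. Its range C(dom Gamma) is dense in the closed range of C,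
   which is the orthogonal complement of ker (C^r)^*; its kernel is trivial, as is the orthogonal
   complement of the range of D^r in H_Psi; and (C^r)^* C Gamma^-1 is the identity. These are the
   defining properties of the pseudo-inverse. If D is closable, then H_Psi is the whole space and
   D^r = D. *)

theory Submission
  imports Defs
begin

section \<open>Complex inner product spaces\<close>

lemma scaleC_zero_left [simp]: "scaleC 0 (x::'a::complex_vector) = 0"
  by (metis scaleR_scaleC scaleR_zero_left of_real_0)

lemma scaleC_minus1: "scaleC (-1) (x::'a::complex_vector) = - x"
  by (metis scaleR_scaleC scaleR_minus1_left of_real_1 of_real_minus)

lemma scaleC_of_real: "scaleC (complex_of_real r) (x::'a::complex_vector) = scaleR r x"
  by (simp add: scaleR_scaleC)

lemma quadratic_nonneg_imp_le:
  fixes p q a :: real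
  assumes "0 \<le> q" "0 \<le> a" and nonneg: "\<And>r. 0 \<le> p - 2 * r * a + r\<^sup>2 * a * q"
  shows "a \<le> p * q"
proof (cases "q = 0")
  case True
  have "a = 0"
  proof (rule ccontr)
    assume "a \<noteq> 0"
    then have "0 \<le> p - (p + 1)"
      using nonneg[of "(p + 1) / (2 * a)"] True by simp
    then show False by simp
  qed
  then show ?thesis using True by simp
next
  case False
  with \<open>0 \<le> q\<close> have "0 < q" by simp
  have "0 \<le> p - 2 * (1/q) * a + (1/q)\<^sup>2 * a * q" by (rule nonneg)
  also have "\<dots> = p - a / q" using \<open>0 < q\<close> by (simp add: field_simps power2_eq_square)
  finally show ?thesis using \<open>0 < q\<close> by (simp add: field_simps)
qed

text \<open>Cauchy-Schwarz is proved for semidefinite forms because it is needed for the inner product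
  of square-summable sequences before that type is known to be a normed space.\<close>

locale hermitian_form =
  fixes B :: "'a::complex_vector \<Rightarrow> 'a \<Rightarrow> complex"
  assumes add_left: "B (x + y) z = B x z + B y z"
    and scaleC_left: "B (scaleC r x) y = r * B x y"
    and commute: "B x y = cnj (B y x)"
    and self_nonneg: "0 \<le> Re (B x x)"
    and self_real: "Im (B x x) = 0"
begin

lemma add_right: "B x (y + z) = B x y + B x z"
  by (metis add_left commute complex_cnj_add)

lemma scaleC_right: "B x (scaleC r y) = cnj r * B x y"
  by (metis commute scaleC_left complex_cnj_mult)

lemma self_eq_Re: "B x x = complex_of_real (Re (B x x))"
  using self_real by (simp add: complex_eq_iff)

lemma cauchy_schwarz: "(cmod (B x y))\<^sup>2 \<le> Re (B x x) * Re (B y y)"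
proof (rule quadratic_nonneg_imp_le)
  fix r :: real
  define a where "a = B x y"
  define s where "s = - (complex_of_real r * a)"
  have a_cnj: "a * cnj a = complex_of_real ((cmod a)\<^sup>2)"
    by (metis complex_norm_square)
  have "B (x + scaleC s y) (x + scaleC s y) = B x x + cnj s * a + s * cnj a + s * cnj s * B y y"
    by (simp add: a_def add_left add_right scaleC_left scaleC_right algebra_simps commute[of y x])
  also have "\<dots> = B x x - 2 * complex_of_real r * (a * cnj a)
      + (complex_of_real r)\<^sup>2 * (a * cnj a) * B y y"
    by (simp add: s_def power2_eq_square algebra_simps)
  finally have "Re (B (x + scaleC s y) (x + scaleC s y))
      = Re (B x x) - 2 * r * (cmod a)\<^sup>2 + r\<^sup>2 * (cmod a)\<^sup>2 * Re (B y y)"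
    using self_real[of y] by (simp add: a_cnj del: of_real_power)
  then show "0 \<le> Re (B x x) - 2 * r * (cmod (B x y))\<^sup>2 + r\<^sup>2 * (cmod (B x y))\<^sup>2 * Re (B y y)"
    using self_nonneg[of "x + scaleC s y"] unfolding a_def by simp
qed (use self_nonneg in auto)

end

interpretation cinner: hermitian_form "cinner :: 'a::complex_inner \<Rightarrow> 'a \<Rightarrow> complex"
  by unfold_locales
    (auto intro: cinner_add_left cinner_scaleC_left cinner_commute cinner_self_nonneg cinner_self_real)

lemma cnj_cinner [simp]: "cnj (cinner x y) = cinner y (x::'a::complex_inner)"
  by (metis cinner_commute)

lemma cinner_add_right: "cinner x (y + z) = cinner x y + cinner (x::'a::complex_inner) z"
  by (rule cinner.add_right)

lemma cinner_scaleC_right: "cinner x (scaleC r y) = cnj r * cinner (x::'a::complex_inner) y"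
  by (rule cinner.scaleC_right)

lemma cinner_zero_left [simp]: "cinner 0 (x::'a::complex_inner) = 0"
  by (metis cinner_scaleC_left scaleC_zero_left mult_zero_left)

lemma cinner_zero_right [simp]: "cinner (x::'a::complex_inner) 0 = 0"
  by (metis cnj_cinner cinner_zero_left complex_cnj_zero)

lemma cinner_minus_left: "cinner (- x) (y::'a::complex_inner) = - cinner x y"
  by (metis cinner_scaleC_left scaleC_minus1 mult_minus1)

lemma cinner_minus_right: "cinner x (- y::'a::complex_inner) = - cinner x y"
  by (metis cnj_cinner cinner_minus_left complex_cnj_minus)

lemma cinner_diff_left: "cinner (x - y) (z::'a::complex_inner) = cinner x z - cinner y z"
  by (simp only: diff_conv_add_uminus cinner_add_left cinner_minus_left)

lemma cinner_diff_right: "cinner x (y - z::'a::complex_inner) = cinner x y - cinner x z"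
  by (simp only: diff_conv_add_uminus cinner_add_right cinner_minus_right)

lemma cinner_self_eq_norm: "cinner x (x::'a::complex_inner) = complex_of_real ((norm x)\<^sup>2)"
  using cinner.self_eq_Re[of x] norm_eq_sqrt_cinner[of x] cinner_self_nonneg[of x] by simp

lemma norm_cinner_le: "cmod (cinner x y) \<le> norm x * norm (y::'a::complex_inner)"
proof -
  have "(cmod (cinner x y))\<^sup>2 \<le> (norm x * norm y)\<^sup>2"
    using cinner.cauchy_schwarz[of x y] by (simp add: cinner_self_eq_norm power_mult_distrib)
  then show ?thesis by (rule power2_le_imp_le) simp
qed

lemma Re_cinner_self: "Re (cinner x (x::'a::complex_inner)) = (norm x)\<^sup>2"
  by (simp add: cinner_self_eq_norm)

lemma norm_scaleC: "norm (scaleC a x) = cmod a * norm (x::'a::complex_inner)"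
proof -
  have "(norm (scaleC a x))\<^sup>2 = Re (a * cnj a * cinner x x)"
    by (simp add: Re_cinner_self[symmetric] cinner_scaleC_left cinner_scaleC_right
        mult.assoc mult.left_commute)
  also have "\<dots> = (cmod a * norm x)\<^sup>2"
    by (simp add: complex_norm_square[symmetric] cinner_self_eq_norm power_mult_distrib
        del: of_real_power)
  finally show ?thesis by simp
qed

lemma norm_add_sq:
  "(norm (x + y))\<^sup>2 = (norm x)\<^sup>2 + (norm y)\<^sup>2 + 2 * Re (cinner x (y::'a::complex_inner))"
proof -
  have "(norm (x + y))\<^sup>2 = Re (cinner x x) + Re (cinner y y) + Re (cinner x y) + Re (cinner y x)"
    by (simp add: Re_cinner_self[symmetric] cinner_add_left cinner_add_right)
  also have "Re (cinner y x) = Re (cinner x y)" by (metis cnj.sel(1) cinner_commute)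
  finally show ?thesis by (simp add: Re_cinner_self)
qed

lemma parallelogram_law:
  "(norm (x - y))\<^sup>2 + (norm (x + y))\<^sup>2 = 2 * (norm x)\<^sup>2 + 2 * (norm (y::'a::complex_inner))\<^sup>2"
  using norm_add_sq[of x y] norm_add_sq[of x "- y"] by (simp add: cinner_minus_right)

lemma bounded_bilinear_cinner: "bounded_bilinear (cinner :: 'a::complex_inner \<Rightarrow> 'a \<Rightarrow> complex)"
proof
  fix a a' b b' :: 'a and r :: real
  show "cinner (a + a') b = cinner a b + cinner a' b" by (rule cinner_add_left)
  show "cinner a (b + b') = cinner a b + cinner a b'" by (rule cinner_add_right)
  show "cinner (scaleR r a) b = scaleR r (cinner a b)"
    by (simp add: scaleR_scaleC cinner_scaleC_left scaleR_conv_of_real)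
  show "cinner a (scaleR r b) = scaleR r (cinner a b)"
    by (simp add: scaleR_scaleC cinner_scaleC_right scaleR_conv_of_real)
next
  show "\<exists>K. \<forall>a b::'a. norm (cinner a b) \<le> norm a * norm b * K"
    by (rule exI[of _ 1]) (simp add: norm_cinner_le)
qed

lemmas tendsto_cinner [tendsto_intros] = bounded_bilinear.tendsto[OF bounded_bilinear_cinner]

lemmas bounded_linear_cinner_left = bounded_bilinear.bounded_linear_left[OF bounded_bilinear_cinner]

lemma bounded_linear_scaleC: "bounded_linear (scaleC a :: 'a::complex_inner \<Rightarrow> 'a)"
proof
  fix x y :: 'a and r :: real
  show "scaleC a (x + y) = scaleC a x + scaleC a y" by (rule scaleC_add_right)
  show "scaleC a (scaleR r x) = scaleR r (scaleC a x)"
    by (simp add: scaleR_scaleC scaleC_scaleC mult.commute)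
  show "\<exists>K. \<forall>x::'a. norm (scaleC a x) \<le> norm x * K"
    by (rule exI[of _ "cmod a"]) (simp add: norm_scaleC mult.commute)
qed

lemmas tendsto_scaleC [tendsto_intros] = bounded_linear.tendsto[OF bounded_linear_scaleC]

lemma cinner_eq_0_on_closure:
  fixes v :: "'a::complex_inner"
  assumes "x \<in> closure S" "\<And>s. s \<in> S \<Longrightarrow> cinner s v = 0"
  shows "cinner x v = 0"
proof -
  obtain X where X: "\<forall>n. X n \<in> S" "X \<longlonglongrightarrow> x"
    using assms(1) by (meson closure_sequential)
  have "(\<lambda>n. cinner (X n) v) \<longlonglongrightarrow> cinner x v" using X by (intro tendsto_intros)
  moreover have "(\<lambda>n. cinner (X n) v) = (\<lambda>n. 0)" using X assms(2) by auto
  ultimately show ?thesis by (metis LIMSEQ_const_iff)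
qed

section \<open>Complex subspaces, the Riesz representation and orthogonal projections\<close>

definition csubspace :: "'a::complex_vector set \<Rightarrow> bool" where
  "csubspace M \<longleftrightarrow> 0 \<in> M \<and> (\<forall>x\<in>M. \<forall>y\<in>M. x + y \<in> M) \<and> (\<forall>a. \<forall>x\<in>M. scaleC a x \<in> M)"

lemma csubspace_0: "csubspace M \<Longrightarrow> 0 \<in> M"
  and csubspace_add: "csubspace M \<Longrightarrow> x \<in> M \<Longrightarrow> y \<in> M \<Longrightarrow> x + y \<in> M"
  and csubspace_scaleC: "csubspace M \<Longrightarrow> x \<in> M \<Longrightarrow> scaleC a x \<in> M"
  by (auto simp: csubspace_def)

lemma csubspace_diff: "csubspace M \<Longrightarrow> x \<in> M \<Longrightarrow> y \<in> M \<Longrightarrow> x - y \<in> M"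
  by (metis csubspace_add csubspace_scaleC scaleC_minus1 diff_conv_add_uminus)

lemma csubspace_scaleR: "csubspace M \<Longrightarrow> x \<in> M \<Longrightarrow> scaleR r x \<in> M"
  by (metis csubspace_scaleC scaleC_of_real)

lemma csubspace_sum:
  assumes "csubspace M"
  shows "finite F \<Longrightarrow> (\<And>i. i \<in> F \<Longrightarrow> f i \<in> M) \<Longrightarrow> sum f F \<in> M"
  by (induction F rule: finite_induct) (simp_all add: assms csubspace_0 csubspace_add)

lemma csubspace_closure:
  fixes M :: "'a::complex_inner set"
  assumes "csubspace M"
  shows "csubspace (closure M)"
  unfolding csubspace_def
proof (intro conjI ballI allI)
  show "0 \<in> closure M" using assms csubspace_0 closure_subset by blast
next
  fix x y assume "x \<in> closure M" "y \<in> closure M"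
  then obtain X Y where X: "\<forall>n. X n \<in> M" "X \<longlonglongrightarrow> x" and Y: "\<forall>n. Y n \<in> M" "Y \<longlonglongrightarrow> y"
    by (meson closure_sequential)
  have "\<forall>n. X n + Y n \<in> M" using X Y assms csubspace_add by blast
  moreover have "(\<lambda>n. X n + Y n) \<longlonglongrightarrow> x + y" using X Y by (intro tendsto_intros)
  ultimately show "x + y \<in> closure M" by (meson closure_sequential)
next
  fix a x assume "x \<in> closure M"
  then obtain X where X: "\<forall>n. X n \<in> M" "X \<longlonglongrightarrow> x" by (meson closure_sequential)
  have "\<forall>n. scaleC a (X n) \<in> M" using X assms csubspace_scaleC by blast
  moreover have "(\<lambda>n. scaleC a (X n)) \<longlonglongrightarrow> scaleC a x" using X by (intro tendsto_intros)
  ultimately show "scaleC a x \<in> closure M" by (meson closure_sequential)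
qed

lemma has_sum_in_closed_csubspace:
  fixes M :: "'a::complex_inner set"
  assumes "csubspace M" "closed M" "(f has_sum s) A" "\<And>i. f i \<in> M"
  shows "s \<in> M"
proof -
  have "(sum f \<longlongrightarrow> s) (finite_subsets_at_top A)" using assms(3) by (simp add: has_sum_def)
  moreover have "\<forall>\<^sub>F F in finite_subsets_at_top A. sum f F \<in> M"
    by (rule eventually_finite_subsets_at_top_weakI) (use csubspace_sum assms(1,4) in blast)
  ultimately show ?thesis
    using Lim_in_closed_set[OF assms(2)] finite_subsets_at_top_neq_bot by blast
qed

lemma Cauchy_if_norm_diff_sq_le:
  fixes X :: "nat \<Rightarrow> 'a::real_normed_vector"
  assumes e: "e \<longlonglongrightarrow> 0" and bound: "\<And>n k. (norm (X n - X k))\<^sup>2 \<le> e n + e k"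
  shows "Cauchy X"
proof (rule metric_CauchyI)
  fix \<epsilon> :: real assume "0 < \<epsilon>"
  then obtain N where N: "\<And>n. n \<ge> N \<Longrightarrow> norm (e n - 0) < \<epsilon>\<^sup>2 / 2"
    using LIMSEQ_D[OF e, of "\<epsilon>\<^sup>2 / 2"] by auto
  have "dist (X n) (X k) < \<epsilon>" if "n \<ge> N" "k \<ge> N" for n k
  proof -
    have "(norm (X n - X k))\<^sup>2 < \<epsilon>\<^sup>2"
      using bound[of n k] N[OF that(1)] N[OF that(2)] by simp
    then show ?thesis using \<open>0 < \<epsilon>\<close> by (simp add: dist_norm power_less_imp_less_base)
  qed
  then show "\<exists>N. \<forall>n\<ge>N. \<forall>k\<ge>N. dist (X n) (X k) < \<epsilon>" by blast
qed

lemma tendsto_additive_bounded_on: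
  fixes L :: "'a::complex_inner \<Rightarrow> complex"
  assumes M: "csubspace M"
    and add: "\<And>x y. x \<in> M \<Longrightarrow> y \<in> M \<Longrightarrow> L (x + y) = L x + L y"
    and bound: "\<And>x. x \<in> M \<Longrightarrow> cmod (L x) \<le> K * norm x"
    and X: "\<And>n. X n \<in> M" "y \<in> M" "X \<longlonglongrightarrow> y"
  shows "(\<lambda>n. L (X n)) \<longlonglongrightarrow> L y"
proof -
  have "(\<lambda>n. L (X n) - L y) \<longlonglongrightarrow> 0"
  proof (rule Lim_null_comparison)
    show "\<forall>\<^sub>F n in sequentially. norm (L (X n) - L y) \<le> \<bar>K\<bar> * norm (X n - y)"
    proof (rule always_eventually, rule allI)
      fix n
      have d: "X n - y \<in> M" using X M csubspace_diff by blast
      have "L (X n) = L (X n - y) + L y" using add[OF d X(2)] by simp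
      then have "norm (L (X n) - L y) = cmod (L (X n - y))" by simp
      also have "\<dots> \<le> K * norm (X n - y)" using bound d by blast
      also have "\<dots> \<le> \<bar>K\<bar> * norm (X n - y)" by (simp add: mult_right_mono)
      finally show "norm (L (X n) - L y) \<le> \<bar>K\<bar> * norm (X n - y)" .
    qed
    show "(\<lambda>n. \<bar>K\<bar> * norm (X n - y)) \<longlonglongrightarrow> 0"
      using X(3) by (simp add: tendsto_mult_right_zero tendsto_norm_zero LIM_zero)
  qed
  then show ?thesis by (rule LIM_zero_cancel)
qed

lemma norm_diff_sq_midpoint:
  fixes u v :: "'a::complex_inner" and L :: "'a \<Rightarrow> complex"
  defines "w \<equiv> scaleR (1/2) (u + v)"
  assumes "L w = (L u + L v) / 2"
  shows "(norm (u - v))\<^sup>2 = 2 * ((norm u)\<^sup>2 - 2 * Re (L u)) + 2 * ((norm v)\<^sup>2 - 2 * Re (L v))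
           - 4 * ((norm w)\<^sup>2 - 2 * Re (L w))"
proof -
  have "Re (L w) = (Re (L u) + Re (L v)) / 2" unfolding assms(2) by simp
  moreover have "(norm w)\<^sup>2 = (norm (u + v))\<^sup>2 / 4"
    by (simp add: w_def power_mult_distrib power_divide)
  ultimately show ?thesis
    using parallelogram_law[of u v] by (simp add: field_simps)
qed

lemma neg_sq_le_norm_sq_minus_Re:
  fixes x :: "'a::real_normed_vector"
  assumes "cmod z \<le> K * norm x"
  shows "- K\<^sup>2 \<le> (norm x)\<^sup>2 - 2 * Re z"
proof -
  have "Re z \<le> \<bar>K\<bar> * norm x"
    using complex_Re_le_cmod[of z] assms abs_ge_self[of K]
    by (meson mult_right_mono norm_ge_zero order_trans)
  moreover have "0 \<le> (norm x - \<bar>K\<bar>)\<^sup>2" by simp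
  moreover have "(norm x - \<bar>K\<bar>)\<^sup>2 = (norm x)\<^sup>2 - 2 * (\<bar>K\<bar> * norm x) + K\<^sup>2"
    by (simp add: power2_eq_square algebra_simps)
  ultimately show ?thesis by linarith
qed

lemma csubspace_functional_minimizer:
  fixes M :: "'a::chilbert set" and L :: "'a \<Rightarrow> complex"
  assumes M: "csubspace M" "closed M"
    and add: "\<And>x y. x \<in> M \<Longrightarrow> y \<in> M \<Longrightarrow> L (x + y) = L x + L y"
    and scale: "\<And>a x. x \<in> M \<Longrightarrow> L (scaleC a x) = a * L x"
    and bound: "\<And>x. x \<in> M \<Longrightarrow> cmod (L x) \<le> K * norm x"
  defines "J \<equiv> \<lambda>x. (norm x)\<^sup>2 - 2 * Re (L x)"
  shows "\<exists>y\<in>M. \<forall>x\<in>M. J y \<le> J x"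
proof -
  have J_lower: "- K\<^sup>2 \<le> J x" if "x \<in> M" for x
    unfolding J_def by (rule neg_sq_le_norm_sq_minus_Re[OF bound[OF that]])
  define m where "m = Inf (J ` M)"
  have m_le: "m \<le> J x" if "x \<in> M" for x
    unfolding m_def using J_lower that by (intro cInf_lower bdd_belowI[of _ "- K\<^sup>2"]) auto
  have "\<exists>x\<in>M. J x < m + inverse (real (Suc n))" for n
    using cInf_lessD[of "J ` M" "m + inverse (real (Suc n))"] csubspace_0[OF M(1)]
    unfolding m_def by auto
  then obtain X where X: "\<And>n. X n \<in> M" "\<And>n. J (X n) < m + inverse (real (Suc n))"
    by metis
  have "(norm (X n - X k))\<^sup>2 \<le> 2 * inverse (real (Suc n)) + 2 * inverse (real (Suc k))" for n k
  proof -
    define w where "w = scaleR (1/2) (X n + X k)"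
    have w: "w \<in> M" unfolding w_def using X(1) M csubspace_add csubspace_scaleR by blast
    have "L w = complex_of_real (1/2) * L (X n + X k)"
      unfolding w_def scaleC_of_real[symmetric] using scale X(1) M csubspace_add by blast
    also have "\<dots> = (L (X n) + L (X k)) / 2" using add X(1) by simp
    finally have "(norm (X n - X k))\<^sup>2 = 2 * J (X n) + 2 * J (X k) - 4 * J w"
      unfolding J_def w_def by (rule norm_diff_sq_midpoint)
    then show ?thesis using X(2)[of n] X(2)[of k] m_le[OF w] by simp
  qed
  moreover have "(\<lambda>n. 2 * inverse (real (Suc n))) \<longlonglongrightarrow> 0"
    by (intro tendsto_mult_right_zero LIMSEQ_inverse_real_of_nat)
  ultimately have "Cauchy X"
    by (intro Cauchy_if_norm_diff_sq_le)
  then obtain y where y: "X \<longlonglongrightarrow> y" using Cauchy_convergent convergent_def by blast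
  have yM: "y \<in> M" using closed_sequentially[OF M(2)] X(1) y by blast
  have "(\<lambda>n. J (X n)) \<longlonglongrightarrow> J y"
    unfolding J_def using tendsto_additive_bounded_on[OF M(1) add bound X(1) yM y]
    by (intro tendsto_intros y)
  moreover have "(\<lambda>n. m + inverse (real (Suc n))) \<longlonglongrightarrow> m"
    using tendsto_add[OF tendsto_const LIMSEQ_inverse_real_of_nat, of m] by simp
  ultimately have "J y \<le> m"
    using X(2) by (intro LIMSEQ_le) (auto intro: less_imp_le)
  then show ?thesis using m_le yM by force
qed

lemma riesz_representation_csubspace:
  fixes M :: "'a::chilbert set" and L :: "'a \<Rightarrow> complex"
  assumes M: "csubspace M" "closed M"
    and add: "\<And>x y. x \<in> M \<Longrightarrow> y \<in> M \<Longrightarrow> L (x + y) = L x + L y"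
    and scale: "\<And>a x. x \<in> M \<Longrightarrow> L (scaleC a x) = a * L x"
    and bound: "\<And>x. x \<in> M \<Longrightarrow> cmod (L x) \<le> K * norm x"
  shows "\<exists>y\<in>M. \<forall>x\<in>M. L x = cinner x y"
proof -
  obtain y where y: "y \<in> M"
    and min: "\<And>x. x \<in> M \<Longrightarrow> (norm y)\<^sup>2 - 2 * Re (L y) \<le> (norm x)\<^sup>2 - 2 * Re (L x)"
    using csubspace_functional_minimizer[OF assms] by blast
  have "L x = cinner x y" if x: "x \<in> M" for x
  proof -
    txt \<open>Perturb the minimiser \<open>y\<close> by \<open>t x\<close> with \<open>t = r cnj w\<close> and \<open>r\<close> small.\<close>
    define w where "w = L x - cinner x y"
    define r :: real where "r = 1 / ((norm x)\<^sup>2 + 1)"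
    define t where "t = complex_of_real r * cnj w"
    have r: "0 < r" "r * (norm x)\<^sup>2 \<le> 1"
      unfolding r_def by (simp_all add: add_nonneg_pos divide_le_eq)
    have tx: "scaleC t x \<in> M" using x M(1) csubspace_scaleC by blast
    have "Re (cnj t * cinner y x) = Re (t * cinner x y)"
      by (metis cnj.sel(1) complex_cnj_mult cnj_cinner)
    then have "Re (cnj t * cinner y x) - Re (t * L x) = - Re (t * w)"
      by (simp add: w_def right_diff_distrib)
    also have "t * w = complex_of_real r * (w * cnj w)"
      by (simp add: t_def mult.commute)
    also have "w * cnj w = complex_of_real ((cmod w)\<^sup>2)"
      by (metis complex_norm_square)
    finally have cross: "Re (cnj t * cinner y x) - Re (t * L x) = - r * (cmod w)\<^sup>2"
      by (simp del: of_real_power)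
    have "(norm (y + scaleC t x))\<^sup>2 - 2 * Re (L (y + scaleC t x))
        = (norm y)\<^sup>2 - 2 * Re (L y) + (cmod t)\<^sup>2 * (norm x)\<^sup>2
          + 2 * (Re (cnj t * cinner y x) - Re (t * L x))"
      using add[OF y tx] scale[OF x]
      by (simp add: norm_add_sq norm_scaleC cinner_scaleC_right algebra_simps)
    also have "(cmod t)\<^sup>2 = r\<^sup>2 * (cmod w)\<^sup>2"
      using r(1) by (simp add: t_def norm_mult power_mult_distrib)
    finally have "2 * r * (cmod w)\<^sup>2 \<le> r * (cmod w)\<^sup>2 * (r * (norm x)\<^sup>2)"
      using min[OF csubspace_add[OF M(1) y tx]] cross by (simp add: power2_eq_square algebra_simps)
    also have "\<dots> \<le> r * (cmod w)\<^sup>2"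
      using r by (intro mult_left_le) simp_all
    finally have "(cmod w)\<^sup>2 \<le> 0" using r(1) by (simp add: zero_le_mult_iff)
    then show ?thesis unfolding w_def by simp
  qed
  then show ?thesis using y by blast
qed

lemma orth_proj_exists_unique:
  fixes M :: "'a::chilbert set"
  assumes "csubspace M" "closed M"
  shows "\<exists>!g. g \<in> M \<and> (\<forall>m\<in>M. cinner (f - g) m = 0)"
proof (rule ex_ex1I)
  obtain g where g: "g \<in> M" "\<forall>m\<in>M. cinner m f = cinner m g"
    using riesz_representation_csubspace[OF assms, of "\<lambda>m. cinner m f" "norm f"]
    by (auto simp: cinner_add_left cinner_scaleC_left norm_cinner_le mult.commute)
  have "cinner (f - g) m = 0" if "m \<in> M" for m
    using g that by (metis cnj_cinner cinner_diff_right complex_cnj_zero diff_self)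
  then show "\<exists>g. g \<in> M \<and> (\<forall>m\<in>M. cinner (f - g) m = 0)" using g by blast
next
  fix g g' assume g: "g \<in> M \<and> (\<forall>m\<in>M. cinner (f - g) m = 0)"
    and g': "g' \<in> M \<and> (\<forall>m\<in>M. cinner (f - g') m = 0)"
  have "g' - g \<in> M" using g g' csubspace_diff[OF assms(1)] by blast
  have "cinner (g' - g) (g' - g) = cinner (f - g) (g' - g) - cinner (f - g') (g' - g)"
    by (simp add: cinner_diff_left)
  also have "\<dots> = 0" using g g' \<open>g' - g \<in> M\<close> by simp
  finally show "g = g'" by (simp add: cinner_eq_zero_iff)
qed

lemma
  fixes M :: "'a::chilbert set"
  assumes "csubspace M" "closed M"
  shows orth_proj_in: "orth_proj M f \<in> M"
    and orth_proj_orthogonal: "m \<in> M \<Longrightarrow> cinner (f - orth_proj M f) m = 0"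
  using theI'[OF orth_proj_exists_unique[OF assms], of f, folded orth_proj_def] by auto

lemma orth_proj_eqI:
  fixes M :: "'a::chilbert set"
  assumes "csubspace M" "closed M" "g \<in> M" "\<forall>m\<in>M. cinner (f - g) m = 0"
  shows "orth_proj M f = g"
  using orth_proj_exists_unique[OF assms(1,2), of f] orth_proj_in[OF assms(1,2)]
    orth_proj_orthogonal[OF assms(1,2)] assms(3,4) by blast

section \<open>The Hilbert space of square-summable sequences\<close>

lemma ell2_zero [simp]: "(\<lambda>i. 0) \<in> ell2"
  by (simp add: ell2_def)

lemma ell2_uminus: "c \<in> ell2 \<Longrightarrow> (\<lambda>i. - c i) \<in> ell2"
  by (simp add: ell2_def)

lemma ell2_scale: "c \<in> ell2 \<Longrightarrow> (\<lambda>i. a * c i) \<in> ell2"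
  unfolding ell2_def by (simp add: norm_mult power_mult_distrib summable_on_cmult_right)

lemma ell2_add:
  assumes "c \<in> ell2" "d \<in> ell2"
  shows "(\<lambda>i. c i + d i) \<in> ell2"
proof -
  have "(\<lambda>i. 2 * (cmod (c i))\<^sup>2 + 2 * (cmod (d i))\<^sup>2) summable_on UNIV"
    using assms by (auto simp: ell2_def intro: summable_on_add summable_on_cmult_right)
  moreover have "(cmod (c i + d i))\<^sup>2 \<le> 2 * (cmod (c i))\<^sup>2 + 2 * (cmod (d i))\<^sup>2" for i
  proof -
    have "(cmod (c i + d i))\<^sup>2 \<le> (cmod (c i) + cmod (d i))\<^sup>2"
      by (simp add: power_mono norm_triangle_ineq)
    also have "\<dots> \<le> 2 * (cmod (c i))\<^sup>2 + 2 * (cmod (d i))\<^sup>2"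
      using zero_le_power2[of "cmod (c i) - cmod (d i)"] unfolding power2_sum power2_diff by linarith
    finally show ?thesis .
  qed
  ultimately show ?thesis
    unfolding ell2_def mem_Collect_eq by (rule summable_on_comparison_test) auto
qed

lemma ell2_diff: "c \<in> ell2 \<Longrightarrow> d \<in> ell2 \<Longrightarrow> (\<lambda>i. c i - d i) \<in> ell2"
  using ell2_add[of c "\<lambda>i. - d i"] ell2_uminus[of d] by simp

lemma summable_on_l2inner:
  assumes "c \<in> ell2" "d \<in> ell2"
  shows "(\<lambda>i. c i * cnj (d i)) summable_on UNIV"
proof -
  have "(\<lambda>i. (cmod (c i))\<^sup>2 + (cmod (d i))\<^sup>2) summable_on UNIV"
    using assms by (auto simp: ell2_def intro: summable_on_add)
  moreover have "norm (c i * cnj (d i)) \<le> (cmod (c i))\<^sup>2 + (cmod (d i))\<^sup>2" for i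
  proof -
    have "0 \<le> cmod (c i) * cmod (d i)" by simp
    moreover have "2 * (cmod (c i) * cmod (d i)) \<le> (cmod (c i))\<^sup>2 + (cmod (d i))\<^sup>2"
      using zero_le_power2[of "cmod (c i) - cmod (d i)"] unfolding power2_diff by simp
    ultimately have "cmod (c i) * cmod (d i) \<le> (cmod (c i))\<^sup>2 + (cmod (d i))\<^sup>2" by linarith
    then show ?thesis by (simp add: norm_mult)
  qed
  ultimately have "(\<lambda>i. norm (c i * cnj (d i))) summable_on UNIV"
    by (rule summable_on_comparison_test) auto
  then show ?thesis by (rule abs_summable_summable)
qed

lemma l2inner_self:
  assumes "c \<in> ell2"
  shows "l2inner c c = complex_of_real (\<Sum>\<^sub>\<infinity>i. (cmod (c i))\<^sup>2)"
proof -
  have "l2inner c c = (\<Sum>\<^sub>\<infinity>i. complex_of_real ((cmod (c i))\<^sup>2))"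
    unfolding l2inner_def by (simp add: complex_norm_square del: of_real_power)
  also have "\<dots> = complex_of_real (\<Sum>\<^sub>\<infinity>i. (cmod (c i))\<^sup>2)"
    using assms unfolding ell2_def by (intro infsumI has_sum_of_real) simp
  finally show ?thesis .
qed

lemma ell2_if_finite_sums_le:
  assumes "\<And>F. finite F \<Longrightarrow> (\<Sum>i\<in>F. (cmod (c i))\<^sup>2) \<le> B"
  shows "c \<in> ell2" and "(\<Sum>\<^sub>\<infinity>i. (cmod (c i))\<^sup>2) \<le> B"
proof -
  have "(\<lambda>i. (cmod (c i))\<^sup>2) summable_on UNIV"
    using assms by (intro nonneg_bdd_above_summable_on bdd_aboveI[of _ B]) auto
  then show "c \<in> ell2" "(\<Sum>\<^sub>\<infinity>i. (cmod (c i))\<^sup>2) \<le> B"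
    unfolding ell2_def using assms by (auto intro: infsum_le_finite_sums)
qed

text \<open>The sequence space becomes a type so that closures, orthogonal projections and the Riesz
  representation apply to it and to its product with \<open>'h\<close>, the space containing the graphs.\<close>

typedef 'i l2 = "ell2 :: ('i \<Rightarrow> complex) set"
  morphisms coef mkl2
  by (rule exI[of _ "\<lambda>i. 0"]) simp

setup_lifting type_definition_l2

instantiation l2 :: (type) complex_vector
begin

lift_definition zero_l2 :: "'i l2" is "\<lambda>i. 0" by simp
lift_definition plus_l2 :: "'i l2 \<Rightarrow> 'i l2 \<Rightarrow> 'i l2" is "\<lambda>c d i. c i + d i" by (rule ell2_add)
lift_definition uminus_l2 :: "'i l2 \<Rightarrow> 'i l2" is "\<lambda>c i. - c i" by (rule ell2_uminus)
lift_definition minus_l2 :: "'i l2 \<Rightarrow> 'i l2 \<Rightarrow> 'i l2" is "\<lambda>c d i. c i - d i" by (rule ell2_diff)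
lift_definition scaleR_l2 :: "real \<Rightarrow> 'i l2 \<Rightarrow> 'i l2" is "\<lambda>r c i. complex_of_real r * c i"
  by (rule ell2_scale)
lift_definition scaleC_l2 :: "complex \<Rightarrow> 'i l2 \<Rightarrow> 'i l2" is "\<lambda>a c i. a * c i"
  by (rule ell2_scale)

instance
  by standard (transfer; simp add: fun_eq_iff algebra_simps)+

end

lift_definition l2_cinner :: "'i l2 \<Rightarrow> 'i l2 \<Rightarrow> complex" is l2inner .

lemma l2_cinner_self: "l2_cinner x x = complex_of_real (\<Sum>\<^sub>\<infinity>i. (cmod (coef x i))\<^sup>2)"
  by transfer (rule l2inner_self)

interpretation l2_cinner: hermitian_form "l2_cinner :: 'i l2 \<Rightarrow> 'i l2 \<Rightarrow> complex"
proof
  fix x y z :: "'i l2" and r :: complex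
  show "l2_cinner (x + y) z = l2_cinner x z + l2_cinner y z"
    by transfer (simp add: l2inner_def distrib_right infsum_add summable_on_l2inner)
  show "l2_cinner (scaleC r x) y = r * l2_cinner x y"
    by transfer (simp add: l2inner_def mult.assoc infsum_cmult_right summable_on_l2inner)
  show "l2_cinner x y = cnj (l2_cinner y x)"
    by transfer (unfold l2inner_def, simp only: infsum_cnj[symmetric], simp add: mult.commute)
  show "0 \<le> Re (l2_cinner x x)" by (simp add: l2_cinner_self infsum_nonneg)
  show "Im (l2_cinner x x) = 0" by (simp add: l2_cinner_self)
qed

definition l2_norm :: "'i l2 \<Rightarrow> real" where
  "l2_norm x = sqrt (Re (l2_cinner x x))"

lemma l2_norm_eq_l2norm: "l2_norm x = l2norm (coef x)"
  by (simp add: l2_norm_def l2_cinner_self l2norm_def)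

lemma l2_norm_sq: "(l2_norm x)\<^sup>2 = Re (l2_cinner x x)"
  using l2_cinner.self_nonneg[of x] by (simp add: l2_norm_def)

lemma l2_norm_nonneg: "0 \<le> l2_norm x"
  using l2_cinner.self_nonneg[of x] by (simp add: l2_norm_def)

lemma l2_norm_eq_0_iff: "l2_norm x = 0 \<longleftrightarrow> x = 0"
proof
  assume "l2_norm x = 0"
  then have "(\<Sum>\<^sub>\<infinity>i. (cmod (coef x i))\<^sup>2) = 0"
    using infsum_nonneg[of UNIV "\<lambda>i. (cmod (coef x i))\<^sup>2"]
    by (simp add: l2_norm_eq_l2norm l2norm_def)
  moreover have "(\<lambda>i. (cmod (coef x i))\<^sup>2) summable_on UNIV"
    using coef[of x] by (simp add: ell2_def)
  ultimately have "((\<lambda>i. (cmod (coef x i))\<^sup>2) has_sum 0) UNIV"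
    by (metis has_sum_infsum)
  then have "coef x i = 0" for i
    using nonneg_has_sum_le_0D[of "\<lambda>i. (cmod (coef x i))\<^sup>2" UNIV 0 i] by simp
  then show "x = 0" by transfer (simp add: fun_eq_iff)
next
  assume "x = 0"
  then show "l2_norm x = 0" unfolding l2_norm_eq_l2norm l2norm_def by transfer simp
qed

lemma l2_norm_triangle: "l2_norm (x + y) \<le> l2_norm x + l2_norm y"
proof -
  have cs: "Re (l2_cinner x y) \<le> l2_norm x * l2_norm y"
  proof -
    have "(cmod (l2_cinner x y))\<^sup>2 \<le> (l2_norm x * l2_norm y)\<^sup>2"
      using l2_cinner.cauchy_schwarz[of x y] by (simp add: l2_norm_sq power_mult_distrib)
    then have "cmod (l2_cinner x y) \<le> l2_norm x * l2_norm y"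
      by (rule power2_le_imp_le) (simp add: l2_norm_nonneg)
    then show ?thesis using complex_Re_le_cmod order_trans by blast
  qed
  have "(l2_norm (x + y))\<^sup>2 = (l2_norm x)\<^sup>2 + (l2_norm y)\<^sup>2 + Re (l2_cinner x y) + Re (l2_cinner y x)"
    by (simp add: l2_norm_sq l2_cinner.add_left l2_cinner.add_right)
  also have "Re (l2_cinner y x) = Re (l2_cinner x y)"
    by (metis cnj.sel(1) l2_cinner.commute)
  also have "(l2_norm x)\<^sup>2 + (l2_norm y)\<^sup>2 + Re (l2_cinner x y) + Re (l2_cinner x y)
      \<le> (l2_norm x + l2_norm y)\<^sup>2"
    using cs by (simp add: power2_eq_square algebra_simps)
  finally show ?thesis
    by (rule power2_le_imp_le) (simp add: l2_norm_nonneg)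
qed

lemma l2_norm_scaleC: "l2_norm (scaleC a x) = cmod a * l2_norm x"
proof -
  have "(l2_norm (scaleC a x))\<^sup>2 = Re (a * cnj a * l2_cinner x x)"
    by (simp only: l2_norm_sq l2_cinner.scaleC_left l2_cinner.scaleC_right mult.assoc mult.left_commute)
  also have "\<dots> = (cmod a * l2_norm x)\<^sup>2"
    using l2_cinner.self_eq_Re[of x]
    by (simp add: complex_norm_square[symmetric] l2_norm_sq power_mult_distrib del: of_real_power)
  finally show ?thesis
    by (simp add: l2_norm_nonneg)
qed

instantiation l2 :: (type) real_normed_vector
begin

definition norm_l2 :: "'i l2 \<Rightarrow> real" where "norm_l2 = l2_norm"
definition dist_l2 :: "'i l2 \<Rightarrow> 'i l2 \<Rightarrow> real" where "dist_l2 x y = l2_norm (x - y)"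
definition sgn_l2 :: "'i l2 \<Rightarrow> 'i l2" where "sgn_l2 x = scaleR (inverse (l2_norm x)) x"
definition uniformity_l2 :: "('i l2 \<times> 'i l2) filter" where
  "uniformity_l2 = (INF e\<in>{0 <..}. principal {(x, y). dist x y < e})"
definition open_l2 :: "'i l2 set \<Rightarrow> bool" where
  "open_l2 U = (\<forall>x\<in>U. \<forall>\<^sub>F (x', y) in uniformity. x' = x \<longrightarrow> y \<in> U)"

instance
proof
  fix x y :: "'a l2" and r :: real
  show "dist x y = norm (x - y)" by (simp add: dist_l2_def norm_l2_def)
  show "sgn x = scaleR (inverse (norm x)) x" by (simp add: sgn_l2_def norm_l2_def)
  show "norm x = 0 \<longleftrightarrow> x = 0" by (simp add: norm_l2_def l2_norm_eq_0_iff)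
  show "norm (x + y) \<le> norm x + norm y" by (simp add: norm_l2_def l2_norm_triangle)
  show "norm (scaleR r x) = \<bar>r\<bar> * norm x"
    using l2_norm_scaleC[of "complex_of_real r" x] by (simp add: norm_l2_def scaleC_of_real)
qed (simp_all add: uniformity_l2_def open_l2_def)

end

instantiation l2 :: (type) complex_inner
begin

definition cinner_l2 :: "'i l2 \<Rightarrow> 'i l2 \<Rightarrow> complex" where "cinner_l2 = l2_cinner"

instance
proof
  fix x y z :: "'a l2" and r :: complex
  show "cinner x y = cnj (cinner y x)" unfolding cinner_l2_def by (rule l2_cinner.commute)
  show "cinner (x + y) z = cinner x z + cinner y z" unfolding cinner_l2_def by (rule l2_cinner.add_left)
  show "cinner (scaleC r x) y = r * cinner x y" unfolding cinner_l2_def by (rule l2_cinner.scaleC_left)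
  show "Im (cinner x x) = 0" unfolding cinner_l2_def by (rule l2_cinner.self_real)
  show "0 \<le> Re (cinner x x)" unfolding cinner_l2_def by (rule l2_cinner.self_nonneg)
  show "norm x = sqrt (Re (cinner x x))" unfolding cinner_l2_def norm_l2_def l2_norm_def ..
  show "cinner x x = 0 \<longleftrightarrow> x = 0"
    unfolding cinner_l2_def
    by (metis l2_norm_def l2_norm_eq_0_iff l2_cinner.self_eq_Re real_sqrt_eq_zero_cancel_iff
        of_real_0 zero_complex.simps(1))
qed

end

lemma norm_l2_sq: "(norm x)\<^sup>2 = (\<Sum>\<^sub>\<infinity>i. (cmod (coef x i))\<^sup>2)"
  by (simp add: norm_l2_def l2_norm_sq l2_cinner_self)

lemma finite_sum_le_norm_l2: "finite F \<Longrightarrow> (\<Sum>i\<in>F. (cmod (coef x i))\<^sup>2) \<le> (norm x)\<^sup>2"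
  unfolding norm_l2_sq
  by (rule finite_sum_le_infsum) (use coef[of x] in \<open>auto simp: ell2_def\<close>)

lemma cinner_l2_eq_l2inner: "cinner x y = l2inner (coef x) (coef y)"
  by (simp add: cinner_l2_def l2_cinner.rep_eq)

lemma bounded_linear_coef: "bounded_linear (\<lambda>x. coef x i)"
proof
  fix x y :: "'a l2" and r :: real
  show "coef (x + y) i = coef x i + coef y i" by (simp add: plus_l2.rep_eq)
  show "coef (scaleR r x) i = scaleR r (coef x i)"
    by (simp add: scaleR_l2.rep_eq scaleR_conv_of_real)
  have "norm (coef x i) \<le> norm x" for x :: "'a l2"
  proof (rule power2_le_imp_le)
    show "(norm (coef x i))\<^sup>2 \<le> (norm x)\<^sup>2" using finite_sum_le_norm_l2[of "{i}" x] by simp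
  qed simp
  then show "\<exists>K. \<forall>x::'a l2. norm (coef x i) \<le> norm x * K"
    by (intro exI[of _ 1]) simp
qed

lemma l2_Cauchy_tail_le:
  fixes X :: "nat \<Rightarrow> 'a l2"
  assumes X: "Cauchy X" and c: "\<And>i. (\<lambda>n. coef (X n) i) \<longlonglongrightarrow> c i" and "0 < e"
  shows "\<exists>N. \<forall>n\<ge>N. (\<lambda>i. coef (X n) i - c i) \<in> ell2
           \<and> (\<Sum>\<^sub>\<infinity>i. (cmod (coef (X n) i - c i))\<^sup>2) \<le> e\<^sup>2"
proof -
  obtain N where N: "\<forall>m\<ge>N. \<forall>n\<ge>N. dist (X m) (X n) < e"
    using metric_CauchyD[OF X \<open>0 < e\<close>] by blast
  have partial: "(\<Sum>i\<in>F. (cmod (coef (X n) i - c i))\<^sup>2) \<le> e\<^sup>2" if "n \<ge> N" "finite F" for n F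
  proof (rule LIMSEQ_le_const2)
    show "(\<lambda>m. \<Sum>i\<in>F. (cmod (coef (X n) i - coef (X m) i))\<^sup>2)
        \<longlonglongrightarrow> (\<Sum>i\<in>F. (cmod (coef (X n) i - c i))\<^sup>2)"
      by (intro tendsto_intros c)
    have "(\<Sum>i\<in>F. (cmod (coef (X n) i - coef (X m) i))\<^sup>2) \<le> e\<^sup>2" if "m \<ge> N" for m
    proof -
      have "(\<Sum>i\<in>F. (cmod (coef (X n) i - coef (X m) i))\<^sup>2) \<le> (norm (X n - X m))\<^sup>2"
        using finite_sum_le_norm_l2[OF \<open>finite F\<close>, of "X n - X m"] by (simp add: minus_l2.rep_eq)
      also have "\<dots> \<le> e\<^sup>2"
        using N \<open>n \<ge> N\<close> that by (intro power_mono) (auto simp: dist_norm less_imp_le)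
      finally show ?thesis .
    qed
    then show "\<exists>N'. \<forall>m\<ge>N'. (\<Sum>i\<in>F. (cmod (coef (X n) i - coef (X m) i))\<^sup>2) \<le> e\<^sup>2"
      by blast
  qed
  show ?thesis
    using ell2_if_finite_sums_le[OF partial] by blast
qed

instance l2 :: (type) chilbert
proof
  fix X :: "nat \<Rightarrow> 'a l2"
  assume X: "Cauchy X"
  have "\<forall>i. \<exists>l. (\<lambda>n. coef (X n) i) \<longlonglongrightarrow> l"
    using bounded_linear.Cauchy[OF bounded_linear_coef X] Cauchy_convergent_iff convergent_def
    by blast
  then obtain c where c: "\<And>i. (\<lambda>n. coef (X n) i) \<longlonglongrightarrow> c i" by metis
  obtain N1 where "(\<lambda>i. coef (X N1) i - c i) \<in> ell2"
    using l2_Cauchy_tail_le[OF X c zero_less_one] by blast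
  then have "(\<lambda>i. coef (X N1) i - (coef (X N1) i - c i)) \<in> ell2"
    using coef ell2_diff by blast
  then have c_ell2: "c \<in> ell2" by simp
  have "X \<longlonglongrightarrow> mkl2 c"
  proof (rule metric_LIMSEQ_I)
    fix e :: real assume "0 < e"
    then obtain N where N: "\<And>n. n \<ge> N \<Longrightarrow> (\<Sum>\<^sub>\<infinity>i. (cmod (coef (X n) i - c i))\<^sup>2) \<le> (e/2)\<^sup>2"
      using l2_Cauchy_tail_le[OF X c, of "e/2"] by (auto simp del: power_divide)
    have "dist (X n) (mkl2 c) \<le> e/2" if "n \<ge> N" for n
    proof (rule power2_le_imp_le)
      show "(dist (X n) (mkl2 c))\<^sup>2 \<le> (e/2)\<^sup>2"
        using N[OF that] by (simp add: dist_norm norm_l2_sq minus_l2.rep_eq mkl2_inverse c_ell2)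
    qed (use \<open>0 < e\<close> in simp)
    then show "\<exists>N. \<forall>n\<ge>N. dist (X n) (mkl2 c) < e" using \<open>0 < e\<close> by force
  qed
  then show "convergent X" by (rule convergentI)
qed

instantiation prod :: (complex_vector, complex_vector) complex_vector
begin

definition scaleC_prod :: "complex \<Rightarrow> 'a \<times> 'b \<Rightarrow> 'a \<times> 'b" where
  "scaleC_prod a x = (scaleC a (fst x), scaleC a (snd x))"

instance
  by standard
    (simp_all add: scaleC_prod_def scaleC_add_right scaleC_add_left scaleC_scaleC scaleC_one
      scaleR_scaleC prod_eq_iff)

end

instantiation prod :: (complex_inner, complex_inner) complex_inner
begin

definition cinner_prod :: "'a \<times> 'b \<Rightarrow> 'a \<times> 'b \<Rightarrow> complex" where
  "cinner_prod x y = cinner (fst x) (fst y) + cinner (snd x) (snd y)"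

instance
proof
  fix x y z :: "'a \<times> 'b" and r :: complex
  have self: "cinner x x = complex_of_real ((norm (fst x))\<^sup>2 + (norm (snd x))\<^sup>2)"
    unfolding cinner_prod_def by (simp add: cinner_self_eq_norm)
  show "cinner x y = cnj (cinner y x)"
    unfolding cinner_prod_def by simp
  show "cinner (x + y) z = cinner x z + cinner y z"
    unfolding cinner_prod_def by (simp add: cinner_add_left)
  show "cinner (scaleC r x) y = r * cinner x y"
    unfolding cinner_prod_def by (simp add: cinner_scaleC_left scaleC_prod_def distrib_left)
  show "Im (cinner x x) = 0" "0 \<le> Re (cinner x x)" "norm x = sqrt (Re (cinner x x))"
    unfolding self by (simp_all add: norm_prod_def)
  have "cinner x x = 0 \<longleftrightarrow> (norm (fst x))\<^sup>2 + (norm (snd x))\<^sup>2 = 0"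
    unfolding self by (metis of_real_0 of_real_eq_iff)
  also have "\<dots> \<longleftrightarrow> x = 0" by (simp add: prod_eq_iff add_nonneg_eq_0_iff)
  finally show "cinner x x = 0 \<longleftrightarrow> x = 0" .
qed

end

instance prod :: (chilbert, chilbert) chilbert ..

lemma cinner_Pair: "cinner (a, b) (c, d) = cinner a c + cinner b d"
  by (simp add: cinner_prod_def)

lemma coef_mkl2: "c \<in> ell2 \<Longrightarrow> coef (mkl2 c) = c"
  by (rule mkl2_inverse) simp

lemma mkl2_zero: "mkl2 (\<lambda>i. 0) = 0"
  by (metis zero_l2.abs_eq)

lemma mkl2_add: "c \<in> ell2 \<Longrightarrow> d \<in> ell2 \<Longrightarrow> mkl2 (\<lambda>i. c i + d i) = mkl2 c + mkl2 d"
  by (rule coef_inject[THEN iffD1]) (simp add: plus_l2.rep_eq coef_mkl2 ell2_add)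

lemma mkl2_diff: "c \<in> ell2 \<Longrightarrow> d \<in> ell2 \<Longrightarrow> mkl2 (\<lambda>i. c i - d i) = mkl2 c - mkl2 d"
  by (rule coef_inject[THEN iffD1]) (simp add: minus_l2.rep_eq coef_mkl2 ell2_diff)

lemma mkl2_scale: "c \<in> ell2 \<Longrightarrow> mkl2 (\<lambda>i. a * c i) = scaleC a (mkl2 c)"
  by (rule coef_inject[THEN iffD1]) (simp add: scaleC_l2.rep_eq coef_mkl2 ell2_scale)

lemma mkl2_uminus_coef: "mkl2 (\<lambda>i. - coef e i) = - e"
  by (rule coef_inject[THEN iffD1]) (simp add: uminus_l2.rep_eq coef_mkl2 ell2_uminus coef)

lemma l2inner_eq_cinner_mkl2: "c \<in> ell2 \<Longrightarrow> d \<in> ell2 \<Longrightarrow> l2inner c d = cinner (mkl2 c) (mkl2 d)"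
  by (simp add: cinner_l2_eq_l2inner coef_mkl2)

lemma l2_lim_iff: "l2_lim x c \<longleftrightarrow> c \<in> ell2 \<and> (\<forall>n. x n \<in> ell2) \<and> (\<lambda>n. mkl2 (x n)) \<longlonglongrightarrow> mkl2 c"
proof -
  have "c \<in> ell2 \<Longrightarrow> (\<forall>n. x n \<in> ell2) \<Longrightarrow>
      (\<lambda>n. l2norm (\<lambda>i. x n i - c i)) = (\<lambda>n. norm (mkl2 (x n) - mkl2 c))"
    by (simp add: norm_l2_def l2_norm_eq_l2norm minus_l2.rep_eq coef_mkl2)
  then show ?thesis
    unfolding l2_lim_def by (auto simp: tendsto_norm_zero_iff LIM_zero_iff)
qed

lemma l2closure_iff:
  assumes "A \<subseteq> ell2"
  shows "c \<in> l2closure A \<longleftrightarrow> c \<in> ell2 \<and> mkl2 c \<in> closure (mkl2 ` A)"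
proof
  assume "c \<in> l2closure A"
  then obtain x where x: "\<forall>n. x n \<in> A" "l2_lim x c" unfolding l2closure_def by blast
  then have "(\<lambda>n. mkl2 (x n)) \<longlonglongrightarrow> mkl2 c" "\<forall>n. mkl2 (x n) \<in> mkl2 ` A"
    by (auto simp: l2_lim_iff)
  then show "c \<in> ell2 \<and> mkl2 c \<in> closure (mkl2 ` A)"
    using x(2) unfolding l2_lim_iff closure_sequential by (intro conjI exI) auto
next
  assume c: "c \<in> ell2 \<and> mkl2 c \<in> closure (mkl2 ` A)"
  then obtain X where X: "\<forall>n. X n \<in> mkl2 ` A" "X \<longlonglongrightarrow> mkl2 c"
    unfolding closure_sequential by blast
  have "\<forall>n. \<exists>a. a \<in> A \<and> X n = mkl2 a" using X(1) by blast
  then obtain x where x: "\<And>n. x n \<in> A" and X_eq: "X = (\<lambda>n. mkl2 (x n))"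
    by (metis choice)
  then have "l2_lim x c"
    unfolding l2_lim_iff using assms c X(2) by auto
  then show "c \<in> l2closure A" unfolding l2closure_def using x(1) by blast
qed

section \<open>Analysis and synthesis operators\<close>

definition ell2_basis :: "'i \<Rightarrow> 'i \<Rightarrow> complex" where
  "ell2_basis j = (\<lambda>i. if i = j then 1 else 0)"

lemma has_sum_single: "((\<lambda>i. if i = j then v else 0) has_sum v) UNIV"
  by (rule has_sum_finite_neutralI[of "{j}"]) auto

lemma ell2_basis_ell2: "ell2_basis j \<in> ell2"
proof -
  have "(\<lambda>i. (cmod (ell2_basis j i))\<^sup>2) = (\<lambda>i. if i = j then 1 else 0)"
    by (auto simp: ell2_basis_def)
  then show ?thesis
    using has_sum_single[of j "1::real"] unfolding ell2_def summable_on_def by auto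
qed

lemma l2inner_ell2_basis: "l2inner c (ell2_basis j) = c j"
proof -
  have "(\<lambda>i. c i * cnj (ell2_basis j i)) = (\<lambda>i. if i = j then c j else 0)"
    by (auto simp: ell2_basis_def)
  then show ?thesis unfolding l2inner_def using has_sum_single[of j "c j"] by (simp add: infsumI)
qed

lemma
  shows ell2_basis_synthesis_dom: "ell2_basis j \<in> synthesis_dom \<phi>"
    and synthesis_ell2_basis: "synthesis \<phi> (ell2_basis j) = \<phi> j"
proof -
  have "(\<lambda>i. scaleC (ell2_basis j i) (\<phi> i)) = (\<lambda>i. if i = j then \<phi> j else 0)"
    by (auto simp: ell2_basis_def scaleC_one)
  then have "((\<lambda>i. scaleC (ell2_basis j i) (\<phi> i)) has_sum \<phi> j) UNIV"
    using has_sum_single[of j "\<phi> j"] by simp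
  then show "ell2_basis j \<in> synthesis_dom \<phi>" "synthesis \<phi> (ell2_basis j) = \<phi> j"
    using ell2_basis_ell2[of j] unfolding synthesis_dom_def synthesis_def by (auto intro: infsumI)
qed

definition analysis :: "('i \<Rightarrow> 'h::complex_inner) \<Rightarrow> 'h \<Rightarrow> 'i \<Rightarrow> complex" where
  "analysis \<phi> x = (\<lambda>i. cinner x (\<phi> i))"

lemma analysis_dom_iff: "x \<in> analysis_dom \<phi> \<longleftrightarrow> analysis \<phi> x \<in> ell2"
  by (simp add: analysis_dom_def analysis_def)

lemma analysis_add: "analysis \<phi> (x + y) = (\<lambda>i. analysis \<phi> x i + analysis \<phi> y i)"
  and analysis_diff: "analysis \<phi> (x - y) = (\<lambda>i. analysis \<phi> x i - analysis \<phi> y i)"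
  and analysis_scaleC: "analysis \<phi> (scaleC a x) = (\<lambda>i. a * analysis \<phi> x i)"
  and analysis_zero: "analysis \<phi> 0 = (\<lambda>i. 0)"
  by (simp_all add: analysis_def cinner_add_left cinner_diff_left cinner_scaleC_left)

lemma csubspace_analysis_dom: "csubspace (analysis_dom \<phi>)"
  unfolding csubspace_def
  by (auto simp: analysis_dom_iff analysis_add analysis_scaleC analysis_zero intro: ell2_add ell2_scale)

lemma synthesis_dom_ell2: "d \<in> synthesis_dom \<phi> \<Longrightarrow> d \<in> ell2"
  by (simp add: synthesis_dom_def)

lemma synthesis_eqI: "((\<lambda>i. scaleC (d i) (\<phi> i)) has_sum s) UNIV \<Longrightarrow> synthesis \<phi> d = s"
  unfolding synthesis_def by (rule infsumI)

lemma synthesis_add: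
  assumes "d \<in> synthesis_dom \<phi>" "d' \<in> synthesis_dom \<phi>"
  shows "(\<lambda>i. d i + d' i) \<in> synthesis_dom \<phi>"
    and "synthesis \<phi> (\<lambda>i. d i + d' i) = synthesis \<phi> d + synthesis \<phi> d'"
proof -
  obtain s s' where s: "((\<lambda>i. scaleC (d i) (\<phi> i)) has_sum s) UNIV"
    and s': "((\<lambda>i. scaleC (d' i) (\<phi> i)) has_sum s') UNIV"
    using assms unfolding synthesis_dom_def by blast
  have "((\<lambda>i. scaleC (d i + d' i) (\<phi> i)) has_sum s + s') UNIV"
    unfolding scaleC_add_left by (rule has_sum_add[OF s s'])
  then show "(\<lambda>i. d i + d' i) \<in> synthesis_dom \<phi>"
    "synthesis \<phi> (\<lambda>i. d i + d' i) = synthesis \<phi> d + synthesis \<phi> d'"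
    using assms s s' ell2_add unfolding synthesis_dom_def by (auto simp: synthesis_eqI)
qed

lemma synthesis_scaleC:
  fixes \<phi> :: "'i \<Rightarrow> 'h::chilbert"
  assumes "d \<in> synthesis_dom \<phi>"
  shows "(\<lambda>i. a * d i) \<in> synthesis_dom \<phi>"
    and "synthesis \<phi> (\<lambda>i. a * d i) = scaleC a (synthesis \<phi> d)"
proof -
  obtain s where s: "((\<lambda>i. scaleC (d i) (\<phi> i)) has_sum s) UNIV"
    using assms unfolding synthesis_dom_def by blast
  have "((\<lambda>i. scaleC (a * d i) (\<phi> i)) has_sum scaleC a s) UNIV"
    unfolding scaleC_scaleC[symmetric] by (rule has_sum_bounded_linear[OF bounded_linear_scaleC s])
  then show "(\<lambda>i. a * d i) \<in> synthesis_dom \<phi>" "synthesis \<phi> (\<lambda>i. a * d i) = scaleC a (synthesis \<phi> d)"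
    using assms s ell2_scale unfolding synthesis_dom_def by (auto simp: synthesis_eqI)
qed

lemma synthesis_zero: "(\<lambda>i. 0) \<in> synthesis_dom \<phi>" "synthesis \<phi> (\<lambda>i. 0) = 0"
  unfolding synthesis_dom_def synthesis_def by (auto intro: has_sum_0)

lemma l2inner_analysis_synthesis:
  fixes \<phi> :: "'i \<Rightarrow> 'h::chilbert"
  assumes "d \<in> synthesis_dom \<phi>"
  shows "l2inner (analysis \<phi> x) d = cinner x (synthesis \<phi> d)"
proof -
  obtain s where s: "((\<lambda>i. scaleC (d i) (\<phi> i)) has_sum s) UNIV"
    using assms unfolding synthesis_dom_def by blast
  have "((\<lambda>i. cinner (scaleC (d i) (\<phi> i)) x) has_sum cinner s x) UNIV"
    by (rule has_sum_bounded_linear[OF bounded_linear_cinner_left s])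
  then have "((\<lambda>i. cnj (d i * cinner (\<phi> i) x)) has_sum cnj (cinner s x)) UNIV"
    by (simp only: cinner_scaleC_left has_sum_cnj_iff)
  then have "((\<lambda>i. analysis \<phi> x i * cnj (d i)) has_sum cinner x s) UNIV"
    by (simp add: analysis_def mult.commute)
  then show ?thesis unfolding l2inner_def synthesis_eqI[OF s] by (rule infsumI)
qed

definition synthesis_graph :: "('i \<Rightarrow> 'h::chilbert) \<Rightarrow> ('i l2 \<times> 'h) set" where
  "synthesis_graph \<phi> = (\<lambda>d. (mkl2 d, synthesis \<phi> d)) ` synthesis_dom \<phi>"

lemma csubspace_synthesis_graph: "csubspace (synthesis_graph \<phi>)"
  unfolding csubspace_def synthesis_graph_def
proof (intro conjI ballI allI)
  show "0 \<in> (\<lambda>d. (mkl2 d, synthesis \<phi> d)) ` synthesis_dom \<phi>"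
    using synthesis_zero by (intro image_eqI[of _ _ "\<lambda>i. 0"]) (simp_all add: mkl2_zero zero_prod_def)
next
  fix u v assume "u \<in> (\<lambda>d. (mkl2 d, synthesis \<phi> d)) ` synthesis_dom \<phi>"
    "v \<in> (\<lambda>d. (mkl2 d, synthesis \<phi> d)) ` synthesis_dom \<phi>"
  then obtain d d' where d: "d \<in> synthesis_dom \<phi>" "u = (mkl2 d, synthesis \<phi> d)"
    and d': "d' \<in> synthesis_dom \<phi>" "v = (mkl2 d', synthesis \<phi> d')" by blast
  then show "u + v \<in> (\<lambda>d. (mkl2 d, synthesis \<phi> d)) ` synthesis_dom \<phi>"
    using synthesis_add[OF d(1) d'(1)] mkl2_add[OF synthesis_dom_ell2 synthesis_dom_ell2, OF d(1) d'(1)]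
    by (intro image_eqI[of _ _ "\<lambda>i. d i + d' i"]) simp_all
next
  fix a u assume "u \<in> (\<lambda>d. (mkl2 d, synthesis \<phi> d)) ` synthesis_dom \<phi>"
  then obtain d where d: "d \<in> synthesis_dom \<phi>" "u = (mkl2 d, synthesis \<phi> d)" by blast
  then show "scaleC a u \<in> (\<lambda>d. (mkl2 d, synthesis \<phi> d)) ` synthesis_dom \<phi>"
    using synthesis_scaleC[OF d(1)] mkl2_scale[OF synthesis_dom_ell2[OF d(1)]]
    by (intro image_eqI[of _ _ "\<lambda>i. a * d i"]) (simp_all add: scaleC_prod_def)
qed

lemma orthogonal_synthesis_graph_imp:
  fixes \<phi> :: "'i \<Rightarrow> 'h::chilbert"
  assumes "\<And>w. w \<in> synthesis_graph \<phi> \<Longrightarrow> cinner (e, x) w = 0"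
  shows "analysis \<phi> x = (\<lambda>j. - coef e j)"
proof
  fix j
  have "(mkl2 (ell2_basis j), \<phi> j) \<in> synthesis_graph \<phi>"
    unfolding synthesis_graph_def
    by (rule image_eqI[OF _ ell2_basis_synthesis_dom]) (simp add: synthesis_ell2_basis)
  then have "cinner e (mkl2 (ell2_basis j)) + cinner x (\<phi> j) = 0"
    using assms cinner_Pair by metis
  moreover have "cinner e (mkl2 (ell2_basis j)) = coef e j"
    by (simp add: cinner_l2_eq_l2inner coef_mkl2 ell2_basis_ell2 l2inner_ell2_basis)
  ultimately show "analysis \<phi> x j = - coef e j"
    by (simp add: analysis_def eq_neg_iff_add_eq_0 add.commute)
qed

text \<open>The remainder \<open>(e, x)\<close> of the projection of \<open>(c, g)\<close> onto the closed graph is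
  orthogonal to every \<open>(\<delta>\<^sub>j, \<phi> j)\<close>, so \<open>C x = - e\<close>; hence it is also orthogonal to
  \<open>(c, g)\<close> and therefore vanishes.\<close>

lemma graph_closure_synthesisI:
  fixes \<phi> :: "'i \<Rightarrow> 'h::chilbert"
  assumes c: "c \<in> ell2"
    and adj: "\<And>x. x \<in> analysis_dom \<phi> \<Longrightarrow> l2inner (analysis \<phi> x) c = cinner x g"
  shows "(c, g) \<in> graph_closure (synthesis_dom \<phi>) (synthesis \<phi>)"
proof -
  define W where "W = closure (synthesis_graph \<phi>)"
  have W: "csubspace W" "closed W"
    unfolding W_def by (auto intro: csubspace_closure csubspace_synthesis_graph)
  define p where "p = (mkl2 c, g)"
  obtain e x where q: "p - orth_proj W p = (e, x)" by fastforce
  have orth: "cinner (e, x) w = 0" if "w \<in> W" for w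
    unfolding q[symmetric] using orth_proj_orthogonal[OF W that] .
  have ex: "analysis \<phi> x = (\<lambda>j. - coef e j)"
    using orth closure_subset unfolding W_def by (intro orthogonal_synthesis_graph_imp) blast
  then have x: "x \<in> analysis_dom \<phi>" by (simp add: analysis_dom_iff ell2_uminus coef)
  have "cinner (e, x) p = cinner e (mkl2 c) + l2inner (analysis \<phi> x) c"
    by (simp add: p_def cinner_Pair adj[OF x])
  also have "l2inner (analysis \<phi> x) c = - cinner e (mkl2 c)"
    using l2inner_eq_cinner_mkl2[OF _ c, of "analysis \<phi> x"] x
    by (simp add: ex mkl2_uminus_coef analysis_dom_iff cinner_minus_left)
  finally have "cinner (e, x) p = 0" by simp
  then have "cinner (e, x) (e, x) = 0"
    using orth[OF orth_proj_in[OF W]] unfolding q[symmetric] by (simp add: cinner_diff_right)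
  then have "p \<in> W"
    using orth_proj_in[OF W, of p] q by (simp add: cinner_eq_zero_iff)
  then obtain Y where Y: "\<forall>n. Y n \<in> synthesis_graph \<phi>" "Y \<longlonglongrightarrow> p"
    unfolding W_def closure_sequential by blast
  have "\<forall>n. \<exists>d. d \<in> synthesis_dom \<phi> \<and> Y n = (mkl2 d, synthesis \<phi> d)"
    using Y(1) unfolding synthesis_graph_def by blast
  then obtain d where d: "\<And>n. d n \<in> synthesis_dom \<phi>"
    and Y_eq: "Y = (\<lambda>n. (mkl2 (d n), synthesis \<phi> (d n)))"
    by (metis choice)
  have "(\<lambda>n. mkl2 (d n)) \<longlonglongrightarrow> mkl2 c" "(\<lambda>n. synthesis \<phi> (d n)) \<longlonglongrightarrow> g"
    using tendsto_fst[OF Y(2)] tendsto_snd[OF Y(2)] unfolding Y_eq p_def by simp_all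
  moreover have "l2_lim d c"
    unfolding l2_lim_iff using c calculation d synthesis_dom_ell2 by blast
  ultimately show ?thesis unfolding graph_closure_def using d by blast
qed

lemma l2inner_add_right:
  "c \<in> ell2 \<Longrightarrow> d \<in> ell2 \<Longrightarrow> d' \<in> ell2 \<Longrightarrow> l2inner c (\<lambda>i. d i + d' i) = l2inner c d + l2inner c d'"
  by (simp add: l2inner_eq_cinner_mkl2 ell2_add mkl2_add cinner_add_right)

lemma l2inner_diff_right:
  "c \<in> ell2 \<Longrightarrow> d \<in> ell2 \<Longrightarrow> d' \<in> ell2 \<Longrightarrow> l2inner c (\<lambda>i. d i - d' i) = l2inner c d - l2inner c d'"
  by (simp add: l2inner_eq_cinner_mkl2 ell2_diff mkl2_diff cinner_diff_right)

lemma l2inner_scale_right: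
  "c \<in> ell2 \<Longrightarrow> d \<in> ell2 \<Longrightarrow> l2inner c (\<lambda>i. a * d i) = cnj a * l2inner c d"
  by (simp add: l2inner_eq_cinner_mkl2 ell2_scale mkl2_scale cinner_scaleC_right)

lemma csubspace_H_Psi: "csubspace (H_Psi \<phi>)"
  and closed_H_Psi: "closed (H_Psi \<phi>)"
  unfolding H_Psi_def by (auto intro: csubspace_closure csubspace_analysis_dom)

lemma analysis_dom_subset_H_Psi: "analysis_dom \<phi> \<subseteq> H_Psi \<phi>"
  unfolding H_Psi_def by (rule closure_subset)

lemma H_Psi_eq_0_if_orthogonal:
  assumes "g \<in> H_Psi \<phi>" "\<And>x. x \<in> analysis_dom \<phi> \<Longrightarrow> cinner x g = 0"
  shows "g = 0"
  using cinner_eq_0_on_closure[of g "analysis_dom \<phi>" g] assms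
  unfolding H_Psi_def by (simp add: cinner_eq_zero_iff)

lemma orth_proj_H_Psi_in: "orth_proj (H_Psi \<psi>) v \<in> H_Psi \<psi>"
  by (rule orth_proj_in[OF csubspace_H_Psi closed_H_Psi])

lemma cinner_orth_proj_H_Psi_right: "f \<in> H_Psi \<psi> \<Longrightarrow> cinner f (orth_proj (H_Psi \<psi>) v) = cinner f v"
  using orth_proj_orthogonal[OF csubspace_H_Psi closed_H_Psi, where f = v and m = f]
  by (metis cnj_cinner complex_cnj_zero cinner_diff_right eq_iff_diff_eq_0)

lemma cinner_orth_proj_H_Psi_left:
  assumes "m \<in> H_Psi \<psi>"
  shows "cinner (orth_proj (H_Psi \<psi>) x) m = cinner x m"
proof -
  have "cinner (x - orth_proj (H_Psi \<psi>) x) m = 0"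
    by (rule orth_proj_orthogonal[OF csubspace_H_Psi closed_H_Psi assms])
  then show ?thesis by (simp add: cinner_diff_left)
qed

lemma orth_proj_H_Psi_id: "f \<in> H_Psi \<psi> \<Longrightarrow> orth_proj (H_Psi \<psi>) f = f"
  by (rule orth_proj_eqI[OF csubspace_H_Psi closed_H_Psi]) simp_all

lemma analysis_orth_proj_H_Psi:
  "analysis (\<lambda>i. orth_proj (H_Psi \<psi>) (\<psi> i)) x = analysis \<psi> (orth_proj (H_Psi \<psi>) x)"
proof -
  let ?P = "orth_proj (H_Psi \<psi>)"
  have "cinner x (?P (\<psi> i)) = cinner (?P x) (?P (\<psi> i))" for i
    by (simp add: cinner_orth_proj_H_Psi_left orth_proj_H_Psi_in)
  then show ?thesis
    by (simp add: analysis_def cinner_orth_proj_H_Psi_right orth_proj_H_Psi_in)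
qed

text \<open>\<open>analysis_adj_rel \<psi> c g\<close> says that \<open>(c, g)\<close> lies in the graph of the adjoint of the analysis
  operator \<open>C\<^sup>r\<^sub>\<Psi>\<close>, viewed as an operator from \<open>H_Psi \<psi>\<close> to \<open>ell2\<close>.\<close>

definition analysis_adj_rel :: "('i \<Rightarrow> 'h::chilbert) \<Rightarrow> ('i \<Rightarrow> complex) \<Rightarrow> 'h \<Rightarrow> bool" where
  "analysis_adj_rel \<psi> c g \<longleftrightarrow> c \<in> ell2 \<and> g \<in> H_Psi \<psi> \<and>
     (\<forall>x\<in>analysis_dom \<psi>. l2inner (analysis \<psi> x) c = cinner x g)"

lemma analysis_adj_rel_unique:
  assumes "analysis_adj_rel \<psi> c g" "analysis_adj_rel \<psi> c g'"
  shows "g = g'"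
proof -
  have "g - g' = 0"
  proof (rule H_Psi_eq_0_if_orthogonal)
    show "g - g' \<in> H_Psi \<psi>"
      using assms csubspace_diff[OF csubspace_H_Psi] unfolding analysis_adj_rel_def by blast
    show "cinner x (g - g') = 0" if "x \<in> analysis_dom \<psi>" for x
      using assms that unfolding analysis_adj_rel_def by (simp add: cinner_diff_right)
  qed
  then show ?thesis by simp
qed

lemma analysis_adj_rel_iff:
  "analysis_adj_rel \<psi> c g \<longleftrightarrow> c \<in> analysis_adj_dom \<psi> \<and> analysis_adj \<psi> c = g"
proof -
  have "analysis_adj \<psi> c = g" if rel: "analysis_adj_rel \<psi> c g" for g
    unfolding analysis_adj_def
  proof (rule the_equality)
    show "g \<in> H_Psi \<psi> \<and> (\<forall>f\<in>analysis_dom \<psi>. l2inner (\<lambda>i. cinner f (\<psi> i)) c = cinner f g)"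
      using rel by (simp add: analysis_adj_rel_def analysis_def)
  next
    fix g' assume "g' \<in> H_Psi \<psi> \<and> (\<forall>f\<in>analysis_dom \<psi>. l2inner (\<lambda>i. cinner f (\<psi> i)) c = cinner f g')"
    then have "analysis_adj_rel \<psi> c g'" using rel by (simp add: analysis_adj_rel_def analysis_def)
    then show "g' = g" using analysis_adj_rel_unique rel by blast
  qed
  moreover have "c \<in> analysis_adj_dom \<psi> \<longleftrightarrow> (\<exists>g. analysis_adj_rel \<psi> c g)"
    unfolding analysis_adj_dom_def analysis_adj_rel_def analysis_def by blast
  ultimately show ?thesis by auto
qed

lemma analysis_adj_rel_zero: "analysis_adj_rel \<psi> (\<lambda>i. 0) 0"
  unfolding analysis_adj_rel_def by (simp add: l2inner_def csubspace_0[OF csubspace_H_Psi])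

lemma analysis_adj_rel_ell2_basis:
  "analysis_adj_rel \<psi> (ell2_basis j) (orth_proj (H_Psi \<psi>) (\<psi> j))"
proof -
  have "cinner x (orth_proj (H_Psi \<psi>) (\<psi> j)) = cinner x (\<psi> j)" if "x \<in> analysis_dom \<psi>" for x
    using cinner_orth_proj_H_Psi_right subsetD[OF analysis_dom_subset_H_Psi that] by blast
  then show ?thesis
    by (simp add: analysis_adj_rel_def ell2_basis_ell2 orth_proj_H_Psi_in l2inner_ell2_basis analysis_def)
qed

lemma
  assumes "analysis_adj_rel \<psi> c g" "analysis_adj_rel \<psi> d h"
  shows analysis_adj_rel_add: "analysis_adj_rel \<psi> (\<lambda>i. c i + d i) (g + h)"
    and analysis_adj_rel_diff: "analysis_adj_rel \<psi> (\<lambda>i. c i - d i) (g - h)"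
  using assms csubspace_add[OF csubspace_H_Psi] csubspace_diff[OF csubspace_H_Psi]
  by (auto simp: analysis_adj_rel_def analysis_dom_iff l2inner_add_right l2inner_diff_right
      cinner_add_right cinner_diff_right ell2_add ell2_diff)

lemma analysis_adj_rel_scale:
  "analysis_adj_rel \<psi> c g \<Longrightarrow> analysis_adj_rel \<psi> (\<lambda>i. a * c i) (scaleC a g)"
  using csubspace_scaleC[OF csubspace_H_Psi]
  by (auto simp: analysis_adj_rel_def analysis_dom_iff l2inner_scale_right cinner_scaleC_right ell2_scale)

section \<open>The closure of the reduced synthesis operator\<close>

lemma synthesis_orth_proj_H_Psi_in:
  assumes "d \<in> synthesis_dom (\<lambda>i. orth_proj (H_Psi \<psi>) (\<psi> i))"
  shows "synthesis (\<lambda>i. orth_proj (H_Psi \<psi>) (\<psi> i)) d \<in> H_Psi \<psi>"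
proof -
  obtain s where s: "((\<lambda>i. scaleC (d i) (orth_proj (H_Psi \<psi>) (\<psi> i))) has_sum s) UNIV"
    using assms unfolding synthesis_dom_def by blast
  have "s \<in> H_Psi \<psi>"
    using csubspace_scaleC[OF csubspace_H_Psi orth_proj_H_Psi_in]
    by (intro has_sum_in_closed_csubspace[OF csubspace_H_Psi closed_H_Psi s])
  then show ?thesis by (simp add: synthesis_eqI[OF s])
qed

lemma analysis_adj_rel_if_graph_closure:
  assumes "(c, g) \<in> graph_closure (red_synthesis_dom \<psi>) (red_synthesis \<psi>)"
  shows "analysis_adj_rel \<psi> c g"
proof -
  let ?\<pi>\<psi> = "\<lambda>i. orth_proj (H_Psi \<psi>) (\<psi> i)"
  obtain x where x: "\<And>n. x n \<in> synthesis_dom ?\<pi>\<psi>" "l2_lim x c"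
    "(\<lambda>n. synthesis ?\<pi>\<psi> (x n)) \<longlonglongrightarrow> g"
    using assms unfolding graph_closure_def red_synthesis_dom_def red_synthesis_def by blast
  have c: "c \<in> ell2" and lim: "(\<lambda>n. mkl2 (x n)) \<longlonglongrightarrow> mkl2 c"
    using x(2) unfolding l2_lim_iff by auto
  have "g \<in> H_Psi \<psi>"
    by (rule closed_sequentially[OF closed_H_Psi synthesis_orth_proj_H_Psi_in[OF x(1)] x(3)])
  moreover have "l2inner (analysis \<psi> y) c = cinner y g" if y: "y \<in> analysis_dom \<psi>" for y
  proof -
    have yH: "y \<in> H_Psi \<psi>" using y analysis_dom_subset_H_Psi by blast
    have "cinner (mkl2 (analysis \<psi> y)) (mkl2 (x n)) = cinner y (synthesis ?\<pi>\<psi> (x n))" for n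
      using l2inner_analysis_synthesis[OF x(1), of y n] y synthesis_dom_ell2[OF x(1)]
      by (simp add: l2inner_eq_cinner_mkl2 analysis_dom_iff analysis_orth_proj_H_Psi
          orth_proj_H_Psi_id[OF yH])
    moreover have "(\<lambda>n. cinner (mkl2 (analysis \<psi> y)) (mkl2 (x n))) \<longlonglongrightarrow> cinner (mkl2 (analysis \<psi> y)) (mkl2 c)"
      by (intro tendsto_intros lim)
    moreover have "(\<lambda>n. cinner y (synthesis ?\<pi>\<psi> (x n))) \<longlonglongrightarrow> cinner y g"
      by (intro tendsto_intros x(3))
    ultimately have "cinner (mkl2 (analysis \<psi> y)) (mkl2 c) = cinner y g"
      using LIMSEQ_unique by auto
    then show ?thesis using y c by (simp add: l2inner_eq_cinner_mkl2 analysis_dom_iff)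
  qed
  ultimately show ?thesis unfolding analysis_adj_rel_def using c by blast
qed

lemma graph_closure_red_synthesis_iff:
  "(c, g) \<in> graph_closure (red_synthesis_dom \<psi>) (red_synthesis \<psi>) \<longleftrightarrow> analysis_adj_rel \<psi> c g"
proof
  assume rel: "analysis_adj_rel \<psi> c g"
  let ?P = "orth_proj (H_Psi \<psi>)"
  have "l2inner (analysis (\<lambda>i. ?P (\<psi> i)) x) c = cinner x g" if "?P x \<in> analysis_dom \<psi>" for x
    using rel that
    by (simp add: analysis_adj_rel_def analysis_orth_proj_H_Psi cinner_orth_proj_H_Psi_left)
  then show "(c, g) \<in> graph_closure (red_synthesis_dom \<psi>) (red_synthesis \<psi>)"
    unfolding red_synthesis_dom_def red_synthesis_def using rel
    by (intro graph_closure_synthesisI)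
      (auto simp: analysis_adj_rel_def analysis_dom_iff analysis_orth_proj_H_Psi)
qed (rule analysis_adj_rel_if_graph_closure)

lemma op_closure_dom_red_synthesis:
  "c \<in> op_closure_dom (red_synthesis_dom \<psi>) (red_synthesis \<psi>) \<longleftrightarrow> (\<exists>g. analysis_adj_rel \<psi> c g)"
  unfolding op_closure_dom_def using graph_closure_red_synthesis_iff by force

lemma op_closure_fun_red_synthesis:
  "analysis_adj_rel \<psi> c g \<Longrightarrow> op_closure_fun (red_synthesis_dom \<psi>) (red_synthesis \<psi>) c = g"
  unfolding op_closure_fun_def graph_closure_red_synthesis_iff
  using analysis_adj_rel_unique by blast

lemma H_Psi_UNIV_if_closable:
  fixes \<psi> :: "'i \<Rightarrow> 'h::chilbert"
  assumes "closable (synthesis_dom \<psi>) (synthesis \<psi>)"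
  shows "H_Psi \<psi> = UNIV"
proof (rule ccontr)
  assume "H_Psi \<psi> \<noteq> UNIV"
  then obtain f where f: "f \<notin> H_Psi \<psi>" by blast
  define z where "z = f - orth_proj (H_Psi \<psi>) f"
  have "z \<noteq> 0" using f orth_proj_H_Psi_in[of \<psi> f] by (auto simp: z_def)
  have "cinner x z = 0" if "x \<in> analysis_dom \<psi>" for x
    using cinner_orth_proj_H_Psi_right[OF subsetD[OF analysis_dom_subset_H_Psi that], of f]
    by (auto simp: z_def cinner_diff_right)
  then have "((\<lambda>i. 0), z) \<in> graph_closure (synthesis_dom \<psi>) (synthesis \<psi>)"
    by (intro graph_closure_synthesisI) (simp_all add: l2inner_def)
  moreover have "((\<lambda>i. 0), 0) \<in> graph_closure (synthesis_dom \<psi>) (synthesis \<psi>)"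
    by (intro graph_closure_synthesisI) (simp_all add: l2inner_def)
  ultimately show False using assms \<open>z \<noteq> 0\<close> unfolding closable_def by blast
qed

lemma red_synthesis_closure_kernel_iff:
  "d \<in> op_closure_dom (red_synthesis_dom \<psi>) (red_synthesis \<psi>)
     \<and> op_closure_fun (red_synthesis_dom \<psi>) (red_synthesis \<psi>) d = 0
   \<longleftrightarrow> analysis_adj_rel \<psi> d 0"
proof
  assume d: "d \<in> op_closure_dom (red_synthesis_dom \<psi>) (red_synthesis \<psi>)
     \<and> op_closure_fun (red_synthesis_dom \<psi>) (red_synthesis \<psi>) d = 0"
  then obtain g where g: "analysis_adj_rel \<psi> d g"
    unfolding op_closure_dom_red_synthesis by blast
  then have "g = 0" using d op_closure_fun_red_synthesis[OF g] by simp
  then show "analysis_adj_rel \<psi> d 0" using g by simp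
next
  assume "analysis_adj_rel \<psi> d 0"
  then show "d \<in> op_closure_dom (red_synthesis_dom \<psi>) (red_synthesis \<psi>)
     \<and> op_closure_fun (red_synthesis_dom \<psi>) (red_synthesis \<psi>) d = 0"
    using op_closure_dom_red_synthesis op_closure_fun_red_synthesis by blast
qed

section \<open>Lower frame sequences and the generalized frame operator\<close>

definition analysis_l2 :: "('i \<Rightarrow> 'h::chilbert) \<Rightarrow> 'h \<Rightarrow> 'i l2" where
  "analysis_l2 \<psi> x = mkl2 (analysis \<psi> x)"

definition analysis_range :: "('i \<Rightarrow> 'h::chilbert) \<Rightarrow> 'i l2 set" where
  "analysis_range \<psi> = analysis_l2 \<psi> ` analysis_dom \<psi>"

lemma coef_analysis_l2: "x \<in> analysis_dom \<psi> \<Longrightarrow> coef (analysis_l2 \<psi> x) = analysis \<psi> x"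
  by (simp add: analysis_l2_def coef_mkl2 analysis_dom_iff)

lemma
  assumes "x \<in> analysis_dom \<psi>" "y \<in> analysis_dom \<psi>"
  shows analysis_l2_add: "analysis_l2 \<psi> (x + y) = analysis_l2 \<psi> x + analysis_l2 \<psi> y"
    and analysis_l2_diff: "analysis_l2 \<psi> (x - y) = analysis_l2 \<psi> x - analysis_l2 \<psi> y"
  using assms
  by (simp_all add: analysis_l2_def analysis_add analysis_diff mkl2_add mkl2_diff analysis_dom_iff)

lemma analysis_l2_scaleC:
  "x \<in> analysis_dom \<psi> \<Longrightarrow> analysis_l2 \<psi> (scaleC a x) = scaleC a (analysis_l2 \<psi> x)"
  by (simp add: analysis_l2_def analysis_scaleC mkl2_scale analysis_dom_iff)

lemma analysis_l2_zero: "analysis_l2 \<psi> 0 = 0"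
  by (simp add: analysis_l2_def analysis_zero mkl2_zero)

lemma l2inner_analysis_eq_cinner:
  "x \<in> analysis_dom \<psi> \<Longrightarrow> c \<in> ell2 \<Longrightarrow> l2inner (analysis \<psi> x) c = cinner (analysis_l2 \<psi> x) (mkl2 c)"
  by (simp add: analysis_l2_def l2inner_eq_cinner_mkl2 analysis_dom_iff)

lemma csubspace_image_analysis_l2:
  assumes "csubspace M" "M \<subseteq> analysis_dom \<psi>"
  shows "csubspace (analysis_l2 \<psi> ` M)"
  unfolding csubspace_def
proof (intro conjI ballI allI)
  show "0 \<in> analysis_l2 \<psi> ` M"
    using csubspace_0[OF assms(1)] analysis_l2_zero[of \<psi>] by (intro image_eqI) auto
next
  fix r s assume "r \<in> analysis_l2 \<psi> ` M" "s \<in> analysis_l2 \<psi> ` M"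
  then obtain x y where xy: "x \<in> M" "y \<in> M" and "r = analysis_l2 \<psi> x" "s = analysis_l2 \<psi> y"
    by blast
  then have "r + s = analysis_l2 \<psi> (x + y)"
    using assms(2) xy by (simp add: analysis_l2_add subsetD)
  moreover have "x + y \<in> M" using csubspace_add[OF assms(1) xy] .
  ultimately show "r + s \<in> analysis_l2 \<psi> ` M" by blast
next
  fix a r assume "r \<in> analysis_l2 \<psi> ` M"
  then obtain x where x: "x \<in> M" and "r = analysis_l2 \<psi> x" by blast
  then have "scaleC a r = analysis_l2 \<psi> (scaleC a x)"
    using assms(2) by (simp add: analysis_l2_scaleC subsetD)
  moreover have "scaleC a x \<in> M" using csubspace_scaleC[OF assms(1) x] .
  ultimately show "scaleC a r \<in> analysis_l2 \<psi> ` M" by blast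
qed

lemma csubspace_analysis_range: "csubspace (analysis_range \<psi>)"
  unfolding analysis_range_def by (rule csubspace_image_analysis_l2[OF csubspace_analysis_dom order_refl])

lemma analysis_l2_limit:
  assumes "\<And>n. x n \<in> analysis_dom \<psi>" "x \<longlonglongrightarrow> x0" "(\<lambda>n. analysis_l2 \<psi> (x n)) \<longlonglongrightarrow> r"
  shows "x0 \<in> analysis_dom \<psi>" and "analysis_l2 \<psi> x0 = r"
proof -
  have "cinner x0 (\<psi> i) = coef r i" for i
  proof (rule LIMSEQ_unique)
    show "(\<lambda>n. cinner (x n) (\<psi> i)) \<longlonglongrightarrow> cinner x0 (\<psi> i)"
      by (intro tendsto_intros assms(2))
    show "(\<lambda>n. cinner (x n) (\<psi> i)) \<longlonglongrightarrow> coef r i"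
      using bounded_linear.tendsto[OF bounded_linear_coef assms(3)] assms(1)
      by (simp add: coef_analysis_l2 analysis_def)
  qed
  then have "analysis \<psi> x0 = coef r" by (simp add: analysis_def fun_eq_iff)
  then show "x0 \<in> analysis_dom \<psi>" "analysis_l2 \<psi> x0 = r"
    by (simp_all add: analysis_dom_iff coef analysis_l2_def coef_inverse)
qed

definition frame_op_inv :: "('i \<Rightarrow> 'h::chilbert) \<Rightarrow> 'h \<Rightarrow> 'h" where
  "frame_op_inv \<psi> h = (THE g. g \<in> frame_op_dom \<psi> \<and> frame_op \<psi> g = h)"

lemma canonical_dual_eq_frame_op_inv:
  "canonical_dual \<psi> i = frame_op_inv \<psi> (orth_proj (H_Psi \<psi>) (\<psi> i))"
  by (simp add: canonical_dual_def frame_op_inv_def)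

lemma frame_op_iff:
  "g \<in> frame_op_dom \<psi> \<and> frame_op \<psi> g = h \<longleftrightarrow> g \<in> analysis_dom \<psi> \<and> analysis_adj_rel \<psi> (analysis \<psi> g) h"
  by (auto simp: frame_op_dom_def frame_op_def analysis_adj_rel_iff analysis_def)

lemma frame_op_dom_iff:
  "g \<in> frame_op_dom \<psi> \<longleftrightarrow> g \<in> analysis_dom \<psi> \<and> (\<exists>h. analysis_adj_rel \<psi> (analysis \<psi> g) h)"
  using frame_op_iff by blast

lemma frame_op_dom_subset: "frame_op_dom \<psi> \<subseteq> analysis_dom \<psi>"
  by (simp add: frame_op_dom_def subsetI)

lemma csubspace_frame_op_dom: "csubspace (frame_op_dom \<psi>)"
  unfolding csubspace_def
proof (intro conjI ballI allI)
  show "0 \<in> frame_op_dom \<psi>"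
    unfolding frame_op_dom_iff analysis_zero
    using csubspace_0[OF csubspace_analysis_dom] analysis_adj_rel_zero by blast
next
  fix x y assume "x \<in> frame_op_dom \<psi>" "y \<in> frame_op_dom \<psi>"
  then obtain g h where "x \<in> analysis_dom \<psi>" "analysis_adj_rel \<psi> (analysis \<psi> x) g"
    "y \<in> analysis_dom \<psi>" "analysis_adj_rel \<psi> (analysis \<psi> y) h"
    unfolding frame_op_dom_iff by blast
  then show "x + y \<in> frame_op_dom \<psi>"
    unfolding frame_op_dom_iff analysis_add
    using analysis_adj_rel_add csubspace_add[OF csubspace_analysis_dom] by blast
next
  fix a x assume "x \<in> frame_op_dom \<psi>"
  then obtain g where "x \<in> analysis_dom \<psi>" "analysis_adj_rel \<psi> (analysis \<psi> x) g"
    unfolding frame_op_dom_iff by blast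
  then show "scaleC a x \<in> frame_op_dom \<psi>"
    unfolding frame_op_dom_iff analysis_scaleC
    using analysis_adj_rel_scale csubspace_scaleC[OF csubspace_analysis_dom] by blast
qed

lemma cinner_analysis_l2_eq_cinner:
  assumes "y \<in> analysis_dom \<psi>" "analysis_adj_rel \<psi> (analysis \<psi> y) h" "x \<in> analysis_dom \<psi>"
  shows "cinner (analysis_l2 \<psi> x) (analysis_l2 \<psi> y) = cinner x h"
proof -
  have "l2inner (analysis \<psi> x) (analysis \<psi> y) = cinner x h"
    using assms unfolding analysis_adj_rel_def by blast
  then show ?thesis
    using assms(1,3) by (simp add: analysis_l2_def l2inner_eq_cinner_mkl2 analysis_dom_iff)
qed

lemma lower_frame_sequence_norm_le:
  assumes "lower_frame_sequence \<psi>"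
  obtains A where "A > 0" "\<And>x. x \<in> analysis_dom \<psi> \<Longrightarrow> A * norm x \<le> norm (analysis_l2 \<psi> x)"
proof -
  obtain A where A: "A > 0"
    "\<And>x. x \<in> analysis_dom \<psi> \<Longrightarrow> A * (norm x)\<^sup>2 \<le> (norm (analysis_l2 \<psi> x))\<^sup>2"
    using assms unfolding lower_frame_sequence_def
    by (auto simp: norm_l2_sq coef_analysis_l2 analysis_def)
  have "sqrt A * norm x \<le> norm (analysis_l2 \<psi> x)" if "x \<in> analysis_dom \<psi>" for x
  proof (rule power2_le_imp_le)
    show "(sqrt A * norm x)\<^sup>2 \<le> (norm (analysis_l2 \<psi> x))\<^sup>2"
      using A(1) A(2)[OF that] by (simp add: power_mult_distrib)
  qed simp
  moreover have "sqrt A > 0" using A(1) by simp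
  ultimately show ?thesis using that by blast
qed

context
  fixes \<psi> :: "'i \<Rightarrow> 'h::chilbert"
  assumes lfs: "lower_frame_sequence \<psi>"
begin

lemma analysis_l2_eq_0_imp:
  assumes "x \<in> analysis_dom \<psi>" "analysis_l2 \<psi> x = 0"
  shows "x = 0"
proof -
  obtain A where "A > 0" "A * norm x \<le> norm (analysis_l2 \<psi> x)"
    using lower_frame_sequence_norm_le[OF lfs] assms(1) by blast
  then show ?thesis using assms(2) by (simp add: mult_le_0_iff)
qed

lemma inj_on_analysis_l2: "inj_on (analysis_l2 \<psi>) (analysis_dom \<psi>)"
proof (rule inj_onI)
  fix x y assume xy: "x \<in> analysis_dom \<psi>" "y \<in> analysis_dom \<psi>" "analysis_l2 \<psi> x = analysis_l2 \<psi> y"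
  then have "analysis_l2 \<psi> (x - y) = 0" by (simp add: analysis_l2_diff)
  then show "x = y"
    using analysis_l2_eq_0_imp[OF csubspace_diff[OF csubspace_analysis_dom xy(1,2)]] by simp
qed

lemma closed_analysis_range: "closed (analysis_range \<psi>)"
  unfolding closed_sequential_limits
proof (intro allI impI, elim conjE)
  fix Y r assume Y: "\<forall>n. Y n \<in> analysis_range \<psi>" "Y \<longlonglongrightarrow> r"
  have "\<forall>n. \<exists>x. x \<in> analysis_dom \<psi> \<and> Y n = analysis_l2 \<psi> x"
    using Y(1) unfolding analysis_range_def by blast
  then obtain x where x: "\<And>n. x n \<in> analysis_dom \<psi>" and Y_eq: "Y = (\<lambda>n. analysis_l2 \<psi> (x n))"
    by (metis choice)
  obtain A where A: "A > 0" "\<And>x. x \<in> analysis_dom \<psi> \<Longrightarrow> A * norm x \<le> norm (analysis_l2 \<psi> x)"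
    using lower_frame_sequence_norm_le[OF lfs] by blast
  have "Cauchy x"
  proof (rule metric_CauchyI)
    fix e :: real assume "0 < e"
    then obtain N where N: "\<forall>m\<ge>N. \<forall>n\<ge>N. dist (Y m) (Y n) < A * e"
      using metric_CauchyD[OF LIMSEQ_imp_Cauchy[OF Y(2)]] A(1) by (meson mult_pos_pos)
    have "dist (x m) (x n) < e" if "m \<ge> N" "n \<ge> N" for m n
    proof -
      have "A * norm (x m - x n) \<le> dist (Y m) (Y n)"
        using A(2)[OF csubspace_diff[OF csubspace_analysis_dom x x]]
        by (simp add: Y_eq dist_norm analysis_l2_diff x)
      also have "\<dots> < A * e" using N that by blast
      finally show ?thesis using A(1) by (simp add: dist_norm)
    qed
    then show "\<exists>N. \<forall>m\<ge>N. \<forall>n\<ge>N. dist (x m) (x n) < e" by blast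
  qed
  then obtain x0 where "x \<longlonglongrightarrow> x0" using Cauchy_convergent convergent_def by blast
  then have "x0 \<in> analysis_dom \<psi>" "analysis_l2 \<psi> x0 = r"
    using analysis_l2_limit[OF x] Y(2) unfolding Y_eq by auto
  then show "r \<in> analysis_range \<psi>" unfolding analysis_range_def by blast
qed

text \<open>The functional \<open>C x \<mapsto> \<langle>x, h\<rangle>\<close> is well defined and bounded on the closed range of
  \<open>C\<close> because \<open>C\<close> is bounded below; its Riesz representative is \<open>C y\<close> with \<open>\<Gamma> y = h\<close>.\<close>

lemma frame_op_surj:
  assumes h: "h \<in> H_Psi \<psi>"
  shows "\<exists>y\<in>analysis_dom \<psi>. analysis_adj_rel \<psi> (analysis \<psi> y) h"
proof -
  obtain A where A: "A > 0" "\<And>x. x \<in> analysis_dom \<psi> \<Longrightarrow> A * norm x \<le> norm (analysis_l2 \<psi> x)"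
    using lower_frame_sequence_norm_le[OF lfs] by blast
  define C_inv where "C_inv = the_inv_into (analysis_dom \<psi>) (analysis_l2 \<psi>)"
  have C_inv: "C_inv (analysis_l2 \<psi> x) = x" if "x \<in> analysis_dom \<psi>" for x
    unfolding C_inv_def using inj_on_analysis_l2 that by (rule the_inv_into_f_f)
  have "\<exists>z\<in>analysis_range \<psi>. \<forall>r\<in>analysis_range \<psi>. cinner (C_inv r) h = cinner r z"
  proof (rule riesz_representation_csubspace[OF csubspace_analysis_range closed_analysis_range,
        where K = "norm h / A"])
    fix r s assume "r \<in> analysis_range \<psi>" "s \<in> analysis_range \<psi>"
    then obtain x y where xy: "x \<in> analysis_dom \<psi>" "y \<in> analysis_dom \<psi>"
      and "r = analysis_l2 \<psi> x" "s = analysis_l2 \<psi> y"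
      unfolding analysis_range_def by blast
    moreover have "x + y \<in> analysis_dom \<psi>" using csubspace_add[OF csubspace_analysis_dom xy] .
    ultimately show "cinner (C_inv (r + s)) h = cinner (C_inv r) h + cinner (C_inv s) h"
      by (simp add: C_inv analysis_l2_add[symmetric] cinner_add_left)
  next
    fix a r assume "r \<in> analysis_range \<psi>"
    then obtain x where x: "x \<in> analysis_dom \<psi>" and "r = analysis_l2 \<psi> x"
      unfolding analysis_range_def by blast
    moreover have "scaleC a x \<in> analysis_dom \<psi>" using csubspace_scaleC[OF csubspace_analysis_dom x] .
    ultimately show "cinner (C_inv (scaleC a r)) h = a * cinner (C_inv r) h"
      by (simp add: C_inv analysis_l2_scaleC[symmetric] cinner_scaleC_left)
  next
    fix r assume "r \<in> analysis_range \<psi>"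
    then obtain x where x: "x \<in> analysis_dom \<psi>" "r = analysis_l2 \<psi> x"
      unfolding analysis_range_def by blast
    have "cmod (cinner (C_inv r) h) \<le> norm x * norm h"
      using x by (simp add: C_inv norm_cinner_le)
    also have "\<dots> \<le> norm r / A * norm h"
      using A x by (intro mult_right_mono) (simp_all add: field_simps mult.commute)
    finally show "cmod (cinner (C_inv r) h) \<le> norm h / A * norm r" by (simp add: field_simps)
  qed
  then obtain y where y: "y \<in> analysis_dom \<psi>"
    and z: "\<And>x. x \<in> analysis_dom \<psi> \<Longrightarrow> cinner x h = cinner (analysis_l2 \<psi> x) (analysis_l2 \<psi> y)"
    unfolding analysis_range_def by (auto simp: C_inv)
  have "analysis_adj_rel \<psi> (analysis \<psi> y) h"
    using y h z unfolding analysis_adj_rel_def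
    by (simp add: analysis_l2_def l2inner_eq_cinner_mkl2 analysis_dom_iff)
  then show ?thesis using y by blast
qed

lemma frame_op_inj:
  assumes "y \<in> analysis_dom \<psi>" "analysis_adj_rel \<psi> (analysis \<psi> y) h"
    and "y' \<in> analysis_dom \<psi>" "analysis_adj_rel \<psi> (analysis \<psi> y') h"
  shows "y = y'"
proof -
  have d: "y - y' \<in> analysis_dom \<psi>"
    using assms csubspace_diff[OF csubspace_analysis_dom] by blast
  have "analysis_adj_rel \<psi> (analysis \<psi> (y - y')) 0"
    using analysis_adj_rel_diff[OF assms(2,4)] by (simp add: analysis_diff)
  then have "cinner (analysis_l2 \<psi> (y - y')) (analysis_l2 \<psi> (y - y')) = 0"
    using cinner_analysis_l2_eq_cinner[OF d _ d] by simp
  then show ?thesis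
    using analysis_l2_eq_0_imp[OF d] by (simp add: cinner_eq_zero_iff)
qed

lemma frame_op_inv:
  assumes "h \<in> H_Psi \<psi>"
  shows "frame_op_inv \<psi> h \<in> analysis_dom \<psi>"
    and "analysis_adj_rel \<psi> (analysis \<psi> (frame_op_inv \<psi> h)) h"
proof -
  have "\<exists>!g. g \<in> frame_op_dom \<psi> \<and> frame_op \<psi> g = h"
    unfolding frame_op_iff using frame_op_surj[OF assms] frame_op_inj by blast
  from theI'[OF this, folded frame_op_inv_def]
  show "frame_op_inv \<psi> h \<in> analysis_dom \<psi>" "analysis_adj_rel \<psi> (analysis \<psi> (frame_op_inv \<psi> h)) h"
    unfolding frame_op_iff by auto
qed

lemma frame_op_inv_eqI:
  "y \<in> analysis_dom \<psi> \<Longrightarrow> analysis_adj_rel \<psi> (analysis \<psi> y) h \<Longrightarrow> frame_op_inv \<psi> h = y"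
  using frame_op_inv frame_op_inj analysis_adj_rel_def by metis

lemma dual_coefficients_eq:
  assumes f: "f \<in> H_Psi \<psi>"
  shows "(\<lambda>i. cinner f (canonical_dual \<psi> i)) = analysis \<psi> (frame_op_inv \<psi> f)"
proof
  fix i
  define t where "t = frame_op_inv \<psi> (orth_proj (H_Psi \<psi>) (\<psi> i))"
  define y where "y = frame_op_inv \<psi> f"
  have t: "t \<in> analysis_dom \<psi>" "analysis_adj_rel \<psi> (analysis \<psi> t) (orth_proj (H_Psi \<psi>) (\<psi> i))"
    unfolding t_def using frame_op_inv orth_proj_H_Psi_in by blast+
  have y: "y \<in> analysis_dom \<psi>" "analysis_adj_rel \<psi> (analysis \<psi> y) f"
    unfolding y_def using frame_op_inv f by blast+
  have "cinner y (\<psi> i) = cinner y (orth_proj (H_Psi \<psi>) (\<psi> i))"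
    using cinner_orth_proj_H_Psi_right subsetD[OF analysis_dom_subset_H_Psi y(1)] by metis
  also have "\<dots> = cinner (analysis_l2 \<psi> y) (analysis_l2 \<psi> t)"
    using cinner_analysis_l2_eq_cinner[OF t y(1)] by simp
  also have "\<dots> = cnj (cinner t f)"
    using cinner_analysis_l2_eq_cinner[OF y t(1)] by (metis cnj_cinner)
  finally show "cinner f (canonical_dual \<psi> i) = analysis \<psi> (frame_op_inv \<psi> f) i"
    by (simp add: canonical_dual_eq_frame_op_inv t_def[symmetric] y_def[symmetric] analysis_def)
qed

section \<open>The pseudo-inverse of the closed reduced synthesis operator\<close>

lemma dual_coefficients_ell2: "f \<in> H_Psi \<psi> \<Longrightarrow> (\<lambda>i. cinner f (canonical_dual \<psi> i)) \<in> ell2"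
  using dual_coefficients_eq frame_op_inv(1) by (simp add: analysis_dom_iff)

lemma image_dual_coefficients:
  "mkl2 ` (\<lambda>f i. cinner f (canonical_dual \<psi> i)) ` H_Psi \<psi> = analysis_l2 \<psi> ` frame_op_dom \<psi>"
proof (intro set_eqI iffI)
  fix r assume "r \<in> mkl2 ` (\<lambda>f i. cinner f (canonical_dual \<psi> i)) ` H_Psi \<psi>"
  then obtain f where f: "f \<in> H_Psi \<psi>" "r = mkl2 (\<lambda>i. cinner f (canonical_dual \<psi> i))" by blast
  then have "r = analysis_l2 \<psi> (frame_op_inv \<psi> f)"
    by (simp add: dual_coefficients_eq analysis_l2_def)
  moreover have "frame_op_inv \<psi> f \<in> frame_op_dom \<psi>"
    unfolding frame_op_dom_iff using frame_op_inv[OF f(1)] by blast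
  ultimately show "r \<in> analysis_l2 \<psi> ` frame_op_dom \<psi>" by blast
next
  fix r assume "r \<in> analysis_l2 \<psi> ` frame_op_dom \<psi>"
  then obtain y where "y \<in> frame_op_dom \<psi>" and r: "r = analysis_l2 \<psi> y" by blast
  then obtain h where y: "y \<in> analysis_dom \<psi>" "analysis_adj_rel \<psi> (analysis \<psi> y) h"
    unfolding frame_op_dom_iff by blast
  have h: "h \<in> H_Psi \<psi>" using y(2) unfolding analysis_adj_rel_def by blast
  have "r = mkl2 (\<lambda>i. cinner h (canonical_dual \<psi> i))"
    by (simp add: r dual_coefficients_eq[OF h] frame_op_inv_eqI[OF y] analysis_l2_def)
  then show "r \<in> mkl2 ` (\<lambda>f i. cinner f (canonical_dual \<psi> i)) ` H_Psi \<psi>" using h by blast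
qed

lemma analysis_range_if_orthogonal_kernel:
  assumes c: "c \<in> ell2" and orth: "\<And>d. analysis_adj_rel \<psi> d 0 \<Longrightarrow> l2inner c d = 0"
  shows "mkl2 c \<in> analysis_range \<psi>"
proof -
  note R = csubspace_analysis_range[of \<psi>] closed_analysis_range
  define u where "u = orth_proj (analysis_range \<psi>) (mkl2 c)"
  define v where "v = mkl2 c - u"
  have u: "u \<in> analysis_range \<psi>" unfolding u_def by (rule orth_proj_in[OF R])
  have v_orth: "cinner m v = 0" if "m \<in> analysis_range \<psi>" for m
    using orth_proj_orthogonal[OF R that, of "mkl2 c"] unfolding v_def u_def
    by (metis cnj_cinner complex_cnj_zero)
  have "l2inner (analysis \<psi> x) (coef v) = cinner x 0" if "x \<in> analysis_dom \<psi>" for x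
    using v_orth[of "analysis_l2 \<psi> x"] that
    by (simp add: l2inner_analysis_eq_cinner coef coef_inverse analysis_range_def)
  then have "analysis_adj_rel \<psi> (coef v) 0"
    unfolding analysis_adj_rel_def using coef csubspace_0[OF csubspace_H_Psi] by blast
  then have "l2inner c (coef v) = 0" by (rule orth)
  then have "cinner (mkl2 c) v = 0"
    using l2inner_eq_cinner_mkl2[OF c coef[of v]] by (simp add: coef_inverse)
  then have "cinner v v = 0"
    using v_orth[OF u] by (simp add: v_def cinner_diff_left)
  then show ?thesis using u by (simp add: v_def cinner_eq_zero_iff)
qed

lemma analysis_range_subset_closure:
  "analysis_range \<psi> \<subseteq> closure (analysis_l2 \<psi> ` frame_op_dom \<psi>)"
proof
  fix r0 assume r0: "r0 \<in> analysis_range \<psi>"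
  define M where "M = closure (analysis_l2 \<psi> ` frame_op_dom \<psi>)"
  have M: "csubspace M" "closed M"
    unfolding M_def
    using csubspace_closure[OF csubspace_image_analysis_l2[OF csubspace_frame_op_dom frame_op_dom_subset]]
    by auto
  have M_sub: "M \<subseteq> analysis_range \<psi>"
    unfolding M_def analysis_range_def
    by (intro closure_minimal image_mono frame_op_dom_subset
        closed_analysis_range[unfolded analysis_range_def])
  define u where "u = orth_proj M r0"
  have u: "u \<in> M" unfolding u_def by (rule orth_proj_in[OF M])
  have "r0 - u \<in> analysis_range \<psi>"
    using csubspace_diff[OF csubspace_analysis_range r0 subsetD[OF M_sub u]] .
  then obtain w where w: "w \<in> analysis_dom \<psi>" "r0 - u = analysis_l2 \<psi> w"
    unfolding analysis_range_def by blast
  define y where "y = frame_op_inv \<psi> w"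
  have "w \<in> H_Psi \<psi>" using w(1) analysis_dom_subset_H_Psi by blast
  then have y: "y \<in> analysis_dom \<psi>" "analysis_adj_rel \<psi> (analysis \<psi> y) w"
    unfolding y_def by (rule frame_op_inv)+
  then have "y \<in> frame_op_dom \<psi>" unfolding frame_op_dom_iff by blast
  then have "analysis_l2 \<psi> y \<in> M" unfolding M_def by (rule subsetD[OF closure_subset imageI])
  then have "cinner (r0 - u) (analysis_l2 \<psi> y) = 0"
    unfolding u_def by (rule orth_proj_orthogonal[OF M])
  then have "cinner (analysis_l2 \<psi> w) (analysis_l2 \<psi> y) = 0" by (simp add: w(2))
  then have "cinner w w = 0" using cinner_analysis_l2_eq_cinner[OF y w(1)] by simp
  then have "r0 - u = 0" using w(2) by (simp add: cinner_eq_zero_iff analysis_l2_zero)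
  then have "r0 = u" by simp
  then show "r0 \<in> closure (analysis_l2 \<psi> ` frame_op_dom \<psi>)" using u unfolding M_def by simp
qed

lemma l2closure_dual_coefficients:
  "l2closure ((\<lambda>f i. cinner f (canonical_dual \<psi> i)) ` H_Psi \<psi>)
     = {c \<in> ell2. \<forall>d. analysis_adj_rel \<psi> d 0 \<longrightarrow> l2inner c d = 0}"
proof (intro set_eqI)
  fix c
  have "(\<lambda>f i. cinner f (canonical_dual \<psi> i)) ` H_Psi \<psi> \<subseteq> ell2"
    using dual_coefficients_ell2 by blast
  from l2closure_iff[OF this, of c]
  have "c \<in> l2closure ((\<lambda>f i. cinner f (canonical_dual \<psi> i)) ` H_Psi \<psi>)
      \<longleftrightarrow> c \<in> ell2 \<and> mkl2 c \<in> closure (analysis_l2 \<psi> ` frame_op_dom \<psi>)"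
    unfolding image_dual_coefficients .
  also have "\<dots> \<longleftrightarrow> c \<in> ell2 \<and> (\<forall>d. analysis_adj_rel \<psi> d 0 \<longrightarrow> l2inner c d = 0)"
  proof (intro iffI conjI allI impI; (elim conjE)?)
    fix d assume c: "c \<in> ell2" "mkl2 c \<in> closure (analysis_l2 \<psi> ` frame_op_dom \<psi>)"
      and d: "analysis_adj_rel \<psi> d 0"
    have "cinner (mkl2 c) (mkl2 d) = 0"
    proof (rule cinner_eq_0_on_closure[OF c(2)])
      fix s assume "s \<in> analysis_l2 \<psi> ` frame_op_dom \<psi>"
      then obtain y where y: "y \<in> analysis_dom \<psi>" "s = analysis_l2 \<psi> y"
        using frame_op_dom_subset by blast
      have "l2inner (analysis \<psi> y) d = 0" using d y(1) unfolding analysis_adj_rel_def by simp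
      then show "cinner s (mkl2 d) = 0"
        using d y by (simp add: analysis_adj_rel_def l2inner_analysis_eq_cinner)
    qed
    then show "l2inner c d = 0"
      using d c(1) by (simp add: analysis_adj_rel_def l2inner_eq_cinner_mkl2)
  next
    assume "c \<in> ell2" "\<forall>d. analysis_adj_rel \<psi> d 0 \<longrightarrow> l2inner c d = 0"
    then have "mkl2 c \<in> analysis_range \<psi>"
      by (intro analysis_range_if_orthogonal_kernel) simp_all
    then show "mkl2 c \<in> closure (analysis_l2 \<psi> ` frame_op_dom \<psi>)"
      using analysis_range_subset_closure by blast
  qed
  finally show "c \<in> l2closure ((\<lambda>f i. cinner f (canonical_dual \<psi> i)) ` H_Psi \<psi>)
      \<longleftrightarrow> c \<in> {c \<in> ell2. \<forall>d. analysis_adj_rel \<psi> d 0 \<longrightarrow> l2inner c d = 0}"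
    by simp
qed

lemma dual_coefficients_kernel:
  "{f \<in> H_Psi \<psi>. (\<lambda>i. cinner f (canonical_dual \<psi> i)) = (\<lambda>i. 0)} = {0}"
proof (intro set_eqI iffI)
  fix f assume "f \<in> {f \<in> H_Psi \<psi>. (\<lambda>i. cinner f (canonical_dual \<psi> i)) = (\<lambda>i. 0)}"
  then have f: "f \<in> H_Psi \<psi>" and zero: "(\<lambda>i. cinner f (canonical_dual \<psi> i)) = (\<lambda>i. 0)"
    by simp_all
  have "analysis_adj_rel \<psi> (\<lambda>i. 0) f"
    using frame_op_inv(2)[OF f] zero dual_coefficients_eq[OF f] by simp
  then show "f \<in> {0}" using analysis_adj_rel_unique analysis_adj_rel_zero by blast
qed (simp add: csubspace_0[OF csubspace_H_Psi])

lemma red_synthesis_closure_range_orthogonal: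
  "{f \<in> H_Psi \<psi>. \<forall>d\<in>op_closure_dom (red_synthesis_dom \<psi>) (red_synthesis \<psi>).
      cinner f (op_closure_fun (red_synthesis_dom \<psi>) (red_synthesis \<psi>) d) = 0} = {0}"
proof (intro set_eqI iffI)
  let ?D = "op_closure_dom (red_synthesis_dom \<psi>) (red_synthesis \<psi>)"
  let ?T = "op_closure_fun (red_synthesis_dom \<psi>) (red_synthesis \<psi>)"
  fix f assume "f \<in> {f \<in> H_Psi \<psi>. \<forall>d\<in>?D. cinner f (?T d) = 0}"
  then have f: "f \<in> H_Psi \<psi>" and orth: "\<And>d. d \<in> ?D \<Longrightarrow> cinner f (?T d) = 0" by simp_all
  have "cinner f (\<psi> j) = 0" for j
  proof -
    have "ell2_basis j \<in> ?D"
      unfolding op_closure_dom_red_synthesis using analysis_adj_rel_ell2_basis by (rule exI)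
    moreover have "?T (ell2_basis j) = orth_proj (H_Psi \<psi>) (\<psi> j)"
      by (rule op_closure_fun_red_synthesis[OF analysis_adj_rel_ell2_basis])
    ultimately show ?thesis using orth cinner_orth_proj_H_Psi_right[OF f] by metis
  qed
  then have "analysis \<psi> f = (\<lambda>i. 0)" by (simp add: analysis_def)
  then show "f \<in> {0}"
    using analysis_l2_eq_0_imp by (simp add: analysis_dom_iff analysis_l2_def mkl2_zero)
qed (simp add: csubspace_0[OF csubspace_H_Psi])

lemma red_synthesis_closure_dual_coefficients:
  assumes "d \<in> op_closure_dom (red_synthesis_dom \<psi>) (red_synthesis \<psi>)"
  defines "g \<equiv> op_closure_fun (red_synthesis_dom \<psi>) (red_synthesis \<psi>) d"
  shows "g \<in> H_Psi \<psi>
      \<and> (\<lambda>i. cinner g (canonical_dual \<psi> i)) \<in> op_closure_dom (red_synthesis_dom \<psi>) (red_synthesis \<psi>)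
      \<and> op_closure_fun (red_synthesis_dom \<psi>) (red_synthesis \<psi>) (\<lambda>i. cinner g (canonical_dual \<psi> i)) = g"
proof -
  obtain g' where g': "analysis_adj_rel \<psi> d g'" using assms(1) op_closure_dom_red_synthesis by blast
  then have g: "analysis_adj_rel \<psi> d g" unfolding g_def by (simp add: op_closure_fun_red_synthesis)
  then have gH: "g \<in> H_Psi \<psi>" by (simp add: analysis_adj_rel_def)
  then have "analysis_adj_rel \<psi> (\<lambda>i. cinner g (canonical_dual \<psi> i)) g"
    using frame_op_inv(2) dual_coefficients_eq by simp
  then show ?thesis
    using gH op_closure_dom_red_synthesis op_closure_fun_red_synthesis by blast
qed

theorem pseudo_inverse_red_synthesis_closure:
  "is_pseudo_inverse (H_Psi \<psi>)
     (op_closure_dom (red_synthesis_dom \<psi>) (red_synthesis \<psi>))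
     (op_closure_fun (red_synthesis_dom \<psi>) (red_synthesis \<psi>))
     (H_Psi \<psi>) (\<lambda>f i. cinner f (canonical_dual \<psi> i))"
proof -
  let ?D = "op_closure_dom (red_synthesis_dom \<psi>) (red_synthesis \<psi>)"
  let ?T = "op_closure_fun (red_synthesis_dom \<psi>) (red_synthesis \<psi>)"
  have "(\<forall>d\<in>?D. ?T d = 0 \<longrightarrow> P d) \<longleftrightarrow> (\<forall>d. d \<in> ?D \<and> ?T d = 0 \<longrightarrow> P d)" for P
    by blast
  then have "(\<forall>d\<in>?D. ?T d = 0 \<longrightarrow> P d) \<longleftrightarrow> (\<forall>d. analysis_adj_rel \<psi> d 0 \<longrightarrow> P d)" for P
    by (simp only: red_synthesis_closure_kernel_iff)
  then have range: "l2closure ((\<lambda>f i. cinner f (canonical_dual \<psi> i)) ` H_Psi \<psi>)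
      = {c \<in> ell2. \<forall>d\<in>?D. ?T d = 0 \<longrightarrow> l2inner c d = 0}"
    by (simp only: l2closure_dual_coefficients)
  have kernel: "{f \<in> H_Psi \<psi>. (\<lambda>i. cinner f (canonical_dual \<psi> i)) = (\<lambda>i. 0)}
      = {f \<in> H_Psi \<psi>. \<forall>d\<in>?D. cinner f (?T d) = 0}"
    by (simp only: dual_coefficients_kernel red_synthesis_closure_range_orthogonal)
  show ?thesis
    unfolding is_pseudo_inverse_def
    by (intro conjI subset_refl ballI dual_coefficients_ell2 range kernel
        red_synthesis_closure_dual_coefficients)
qed

end

theorem theorem6p14:
  fixes \<psi> :: "'i::countable \<Rightarrow> 'h::{chilbert, second_countable_topology}"
  assumes "lower_frame_sequence \<psi>"
  shows "is_pseudo_inverse (H_Psi \<psi>)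
           (op_closure_dom (red_synthesis_dom \<psi>) (red_synthesis \<psi>))
           (op_closure_fun (red_synthesis_dom \<psi>) (red_synthesis \<psi>))
           (H_Psi \<psi>) (\<lambda>f i. cinner f (canonical_dual \<psi> i))
       \<and> (closable (synthesis_dom \<psi>) (synthesis \<psi>) \<longrightarrow>
          is_pseudo_inverse UNIV
           (op_closure_dom (synthesis_dom \<psi>) (synthesis \<psi>))
           (op_closure_fun (synthesis_dom \<psi>) (synthesis \<psi>))
           UNIV (\<lambda>f i. cinner f (canonical_dual \<psi> i)))"
proof (intro conjI impI)
  show reduced: "is_pseudo_inverse (H_Psi \<psi>)
      (op_closure_dom (red_synthesis_dom \<psi>) (red_synthesis \<psi>))
      (op_closure_fun (red_synthesis_dom \<psi>) (red_synthesis \<psi>))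
      (H_Psi \<psi>) (\<lambda>f i. cinner f (canonical_dual \<psi> i))"
    by (rule pseudo_inverse_red_synthesis_closure[OF assms])
  assume "closable (synthesis_dom \<psi>) (synthesis \<psi>)"
  then have H: "H_Psi \<psi> = UNIV" by (rule H_Psi_UNIV_if_closable)
  then have "(\<lambda>i. orth_proj (H_Psi \<psi>) (\<psi> i)) = \<psi>" by (intro ext orth_proj_H_Psi_id) simp
  then have "red_synthesis_dom \<psi> = synthesis_dom \<psi>" "red_synthesis \<psi> = synthesis \<psi>"
    by (simp_all add: red_synthesis_dom_def red_synthesis_def)
  with reduced H show "is_pseudo_inverse UNIV
      (op_closure_dom (synthesis_dom \<psi>) (synthesis \<psi>))
      (op_closure_fun (synthesis_dom \<psi>) (synthesis \<psi>))
      UNIV (\<lambda>f i. cinner f (canonical_dual \<psi> i))"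
    by simp
qed

end
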